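(* For every fixed-precision transformer $T$ over a finite alphabet $\Sigma$ with bit precision $p$, hidden dimension $d$ and depth $L$, there exists a $\mathsf{C\text{-}RASP}_+$ program $P$ that simulates $T$ and has size $O(|\Sigma|\,L\,p^2\,d\,2^{p^3d})$, depth $O(L)$, precision $O(p)$ and girth $O(p)$.
   Context: $\mathbb F=\mathbb F_{p,s}$ is the set of rationals $m\cdot 2^{-s}$ with $m\in\mathbb Z$, $-2^{p-1}\le m<2^{p-1}$; $\mathrm{round}(x)$ is the greatest element of $\mathbb F$ that is $\le x$. A (future-masked) fixed-precision transformer of depth $L$ and dimension $d$ consists of functions $E:\Sigma\to\mathbb F^d$, $W_Q^{(\ell)},W_K^{(\ell)},W_V^{(\ell)},f^{(\ell)}:\mathbb F^d\to\mathbb F^d$ and $W_{\mathrm{out}}:\mathbb F^d\to\mathbb F$; on input $u$: $h^{(0)}_i=E(u_i)$; per layer $q_i,k_i,v_i$ are the three maps applied to $h^{(\ell-1)}_i$, $s_{ij}=q_i\cdot k_j$, $B_i=\sum_{j\le i}\mathrm{round}(\exp(s_{ij}))$, $\alpha_{ij}=\mathrm{round}(\mathrm{round}(\exp(s_{ij}))/B_i)$, $c_i=\mathrm{round}(\sum_{j\le i}\alpha_{ij}v_j)$, $h^{(\ell)}_i=f^{(\ell)}(c_i+h^{(\ell-1)}_i)$; the output at position $i$ is $T(u)_i=W_{\mathrm{out}}(h^{(L)}_i)$. $\mathsf{C\text{-}RASP}_+$: $\phi ::= \sigma \mid \neg\phi \mid \phi_1\wedge\phi_2 \mid \sum_t\alpha_t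 t\sim k$, $t ::= \#[\phi]\mid c$, $\alpha_t,k,c\in\mathbb N$, ${\sim}\in\{\ge,>,=,<,\le\}$, with $\#[\phi]$ counting positions $j\le i$ satisfying $\phi$. A formula $\phi$ simulates $T$ if for all $w\in\Sigma^*$ and positions $i$ of $w$: $w,i\models\phi$ iff the output of $T$ on $\texttt{<BOS>}\cdot w$ (with a special beginning-of-sequence symbol prepended) at the position of $w_i$ is $>0$. Program size counts symbols (constants in binary, references to earlier lines as 1); depth counts nesting of $\#$; precision is the number of bits of the largest constant; girth is the maximum number of summands in a sum. *)

theory Defs
  imports Complex_Main
begin

definition Fnum :: "nat \<Rightarrow> nat \<Rightarrow> real set" where
  "Fnum p s = {real_of_int m / 2 ^ s | m. - (2 ^ (p - 1)) \<le> m \<and> m < 2 ^ (p - 1)}"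

text \<open>round(x): greatest element of F that is <= x.  Convention when no such element
  exists (x below the minimum of F): the minimum of F (saturation).\<close>
definition rnd :: "nat \<Rightarrow> nat \<Rightarrow> real \<Rightarrow> real" where
  "rnd p s x = (if \<exists>y\<in>Fnum p s. y \<le> x then Max {y \<in> Fnum p s. y \<le> x} else Min (Fnum p s))"

definition Fvec :: "nat \<Rightarrow> nat \<Rightarrow> nat \<Rightarrow> real list set" where
  "Fvec p s d = {x. length x = d \<and> set x \<subseteq> Fnum p s}"

definition dotp :: "real list \<Rightarrow> real list \<Rightarrow> real" where
  "dotp x y = sum_list (map2 (*) x y)"

text \<open>Input symbols are natural numbers; the beginning-of-sequence symbol is None.
  A layer is (W_Q, W_K, W_V, f).\<close>
type_synonym vecfun = "real list \<Rightarrow> real list"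

record transformer =
  emb    :: "nat option \<Rightarrow> real list"
  layers :: "(vecfun \<times> vecfun \<times> vecfun \<times> vecfun) list"
  wout   :: "real list \<Rightarrow> real"

definition tdepth :: "transformer \<Rightarrow> nat" where
  "tdepth T = length (layers T)"

definition wf_transformer :: "nat set \<Rightarrow> nat \<Rightarrow> nat \<Rightarrow> nat \<Rightarrow> transformer \<Rightarrow> bool" where
  "wf_transformer \<Sigma> p s d T \<longleftrightarrow>
     (\<forall>a \<in> insert None (Some ` \<Sigma>). emb T a \<in> Fvec p s d) \<and>
     (\<forall>(WQ, WK, WV, f) \<in> set (layers T).
        (\<forall>x \<in> Fvec p s d. WQ x \<in> Fvec p s d \<and> WK x \<in> Fvec p s d \<and> WV x \<in> Fvec p s d) \<and>
        (\<forall>x. length x = d \<longrightarrow> f x \<in> Fvec p s d)) \<and>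
     (\<forall>x \<in> Fvec p s d. wout T x \<in> Fnum p s)"

definition layer_apply :: "nat \<Rightarrow> nat \<Rightarrow> nat \<Rightarrow> (vecfun \<times> vecfun \<times> vecfun \<times> vecfun)
    \<Rightarrow> real list list \<Rightarrow> real list list" where
  "layer_apply p s d lay H =
    (case lay of (WQ, WK, WV, f) \<Rightarrow>
      let q = (\<lambda>i. WQ (H ! i)); k = (\<lambda>j. WK (H ! j)); v = (\<lambda>j. WV (H ! j));
          e = (\<lambda>i j. rnd p s (exp (dotp (q i) (k j))));
          B = (\<lambda>i. \<Sum>j\<le>i. e i j);
          \<alpha> = (\<lambda>i j. rnd p s (e i j / B i));
          c = (\<lambda>i. map (\<lambda>t. rnd p s (\<Sum>j\<le>i. \<alpha> i j * (v j ! t))) [0..<d])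
      in map (\<lambda>i. f (map2 (+) (c i) (H ! i))) [0..<length H])"

definition hidden :: "nat \<Rightarrow> nat \<Rightarrow> nat \<Rightarrow> transformer \<Rightarrow> nat option list \<Rightarrow> real list list" where
  "hidden p s d T u = foldl (\<lambda>H lay. layer_apply p s d lay H) (map (emb T) u) (layers T)"

definition tout :: "nat \<Rightarrow> nat \<Rightarrow> nat \<Rightarrow> transformer \<Rightarrow> nat option list \<Rightarrow> nat \<Rightarrow> real" where
  "tout p s d T u i = wout T (hidden p s d T u ! i)"

datatype cmp = Ge | Gt | Eq | Lt | Le

datatype form =
    Sym nat
  | Neg form
  | Conj form form
  | Cmp "(nat \<times> cterm) list" cmp nat     \<comment> \<open>sum of alpha_t * t  ~  k\<close>
  | Ref nat                             \<comment> \<open>reference to an earlier program line\<close>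
and cterm =
    Cnt form
  | Const nat

fun cmp_sem :: "cmp \<Rightarrow> nat \<Rightarrow> nat \<Rightarrow> bool" where
  "cmp_sem Ge a b = (a \<ge> b)"
| "cmp_sem Gt a b = (a > b)"
| "cmp_sem Eq a b = (a = b)"
| "cmp_sem Lt a b = (a < b)"
| "cmp_sem Le a b = (a \<le> b)"

text \<open>Semantics of (reference-free) formulas: w, i |= phi (positions 0-based).\<close>
primrec sat :: "nat list \<Rightarrow> nat \<Rightarrow> form \<Rightarrow> bool"
and tval :: "nat list \<Rightarrow> nat \<Rightarrow> cterm \<Rightarrow> nat" where
  "sat w i (Sym a) = (w ! i = a)"
| "sat w i (Neg \<phi>) = (\<not> sat w i \<phi>)"
| "sat w i (Conj \<phi> \<psi>) = (sat w i \<phi> \<and> sat w i \<psi>)"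
| "sat w i (Cmp ts c k) = cmp_sem c (sum_list (map (\<lambda>(a, n). a * n) (map (map_prod id (tval w i)) ts))) k"
| "sat w i (Ref n) = False"
| "tval w i (Cnt \<phi>) = card {j. j \<le> i \<and> sat w j \<phi>}"
| "tval w i (Const c) = c"

primrec subst :: "form list \<Rightarrow> form \<Rightarrow> form"
and subst_t :: "form list \<Rightarrow> cterm \<Rightarrow> cterm" where
  "subst L (Sym a) = Sym a"
| "subst L (Neg \<phi>) = Neg (subst L \<phi>)"
| "subst L (Conj \<phi> \<psi>) = Conj (subst L \<phi>) (subst L \<psi>)"
| "subst L (Cmp ts c k) = Cmp (map (map_prod id (subst_t L)) ts) c k"
| "subst L (Ref n) = (if n < length L then L ! n else Ref n)"
| "subst_t L (Cnt \<phi>) = Cnt (subst L \<phi>)"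
| "subst_t L (Const c) = Const c"

primrec refs :: "form \<Rightarrow> nat set" and refs_t :: "cterm \<Rightarrow> nat set" where
  "refs (Sym a) = {}"
| "refs (Neg \<phi>) = refs \<phi>"
| "refs (Conj \<phi> \<psi>) = refs \<phi> \<union> refs \<psi>"
| "refs (Cmp ts c k) = \<Union> (set (map snd (map (map_prod id refs_t) ts)))"
| "refs (Ref n) = {n}"
| "refs_t (Cnt \<phi>) = refs \<phi>"
| "refs_t (Const c) = {}"

definition wf_prog :: "form list \<Rightarrow> bool" where
  "wf_prog P \<longleftrightarrow> P \<noteq> [] \<and> (\<forall>k < length P. \<forall>j \<in> refs (P ! k). j < k)"

definition expand_lines :: "form list \<Rightarrow> form list" where
  "expand_lines P = foldl (\<lambda>acc l. acc @ [subst acc l]) [] P"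

definition prog_formula :: "form list \<Rightarrow> form" where
  "prog_formula P = last (expand_lines P)"

fun bitlen :: "nat \<Rightarrow> nat" where
  "bitlen n = (if n < 2 then 1 else 1 + bitlen (n div 2))"

primrec fsize :: "form \<Rightarrow> nat" and tsize :: "cterm \<Rightarrow> nat" where
  "fsize (Sym a) = 1"
| "fsize (Neg \<phi>) = 1 + fsize \<phi>"
| "fsize (Conj \<phi> \<psi>) = 1 + fsize \<phi> + fsize \<psi>"
| "fsize (Cmp ts c k) = sum_list (map (\<lambda>(a, n). 1 + bitlen a + n) (map (map_prod id tsize) ts)) + 1 + bitlen k"
| "fsize (Ref n) = 1"
| "tsize (Cnt \<phi>) = 1 + fsize \<phi>"
| "tsize (Const c) = bitlen c"

definition prog_size :: "form list \<Rightarrow> nat" where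
  "prog_size P = sum_list (map fsize P)"

primrec fdepth :: "form \<Rightarrow> nat" and tdepth_t :: "cterm \<Rightarrow> nat" where
  "fdepth (Sym a) = 0"
| "fdepth (Neg \<phi>) = fdepth \<phi>"
| "fdepth (Conj \<phi> \<psi>) = max (fdepth \<phi>) (fdepth \<psi>)"
| "fdepth (Cmp ts c k) = Max (insert 0 (set (map snd (map (map_prod id tdepth_t) ts))))"
| "fdepth (Ref n) = 0"
| "tdepth_t (Cnt \<phi>) = 1 + fdepth \<phi>"
| "tdepth_t (Const c) = 0"

definition prog_depth :: "form list \<Rightarrow> nat" where
  "prog_depth P = fdepth (prog_formula P)"

primrec fconsts :: "form \<Rightarrow> nat set" and tconsts :: "cterm \<Rightarrow> nat set" where
  "fconsts (Sym a) = {}"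
| "fconsts (Neg \<phi>) = fconsts \<phi>"
| "fconsts (Conj \<phi> \<psi>) = fconsts \<phi> \<union> fconsts \<psi>"
| "fconsts (Cmp ts c k) = insert k (\<Union> (set (map (\<lambda>(a, S). insert a S) (map (map_prod id tconsts) ts))))"
| "fconsts (Ref n) = {}"
| "tconsts (Cnt \<phi>) = fconsts \<phi>"
| "tconsts (Const c) = {c}"

definition prog_precision :: "form list \<Rightarrow> nat" where
  "prog_precision P = bitlen (Max (insert 0 (\<Union>l \<in> set P. fconsts l)))"

primrec fgirth :: "form \<Rightarrow> nat" and tgirth :: "cterm \<Rightarrow> nat" where
  "fgirth (Sym a) = 0"
| "fgirth (Neg \<phi>) = fgirth \<phi>"
| "fgirth (Conj \<phi> \<psi>) = max (fgirth \<phi>) (fgirth \<psi>)"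
| "fgirth (Cmp ts c k) = Max (insert (length ts) (set (map snd (map (map_prod id tgirth) ts))))"
| "fgirth (Ref n) = 0"
| "tgirth (Cnt \<phi>) = fgirth \<phi>"
| "tgirth (Const c) = 0"

definition prog_girth :: "form list \<Rightarrow> nat" where
  "prog_girth P = Max (insert 0 (fgirth ` set P))"

definition simulates :: "nat set \<Rightarrow> nat \<Rightarrow> nat \<Rightarrow> nat \<Rightarrow> transformer \<Rightarrow> form list \<Rightarrow> bool" where
  "simulates \<Sigma> p s d T P \<longleftrightarrow>
     (\<forall>w i. set w \<subseteq> \<Sigma> \<longrightarrow> i < length w \<longrightarrow>
        (sat w i (prog_formula P) \<longleftrightarrow> tout p s d T (None # map Some w) (Suc i) > 0))"

end

theory Submission
  imports Defs
begin

text \<open>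
  The program has a line for every layer \<open>l \<le> L\<close> and every vector \<open>v \<in> \<bbbF>\<^sup>d\<close>, true at a
  position iff the hidden vector there after \<open>l\<close> layers is \<open>v\<close>; the output line is the disjunction
  of the last-layer lines whose vector has positive output. Layer-0 lines are disjunctions of symbols.
  For layer \<open>l + 1\<close>, the rounded scores are \<open>m * 2^-s\<close> with integers \<open>0 \<le> m < 2^(p-1)\<close>, so the
  softmax denominator and the positive and negative parts of each attention coordinate's numerator
  are integer prefix sums of functions of the layer-\<open>l\<close> vectors. Writing the summands in binary, such a
  sum is \<open>\<Sum>b. 2^b * #[bit b is set]\<close>, and each bit is a disjunction of layer-\<open>l\<close> lines. If the
  denominator reaches \<open>2^(s+p)\<close> every weight rounds to \<open>0\<close>; otherwise denominator and numerators
  stay below \<open>2^(4p)\<close>, and the attention output is fixed by finitely many equality tests. Each layer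
  adds one level of counting, all constants are at most \<open>2^(4p)\<close> and every sum has \<open>2p + 1\<close>
  summands. For \<open>p = 1\<close> all weights vanish and a single line suffices.
\<close>

section \<open>Programs with references\<close>

primrec sat_env :: "(nat \<Rightarrow> nat \<Rightarrow> bool) \<Rightarrow> nat list \<Rightarrow> nat \<Rightarrow> form \<Rightarrow> bool"
and tval_env :: "(nat \<Rightarrow> nat \<Rightarrow> bool) \<Rightarrow> nat list \<Rightarrow> nat \<Rightarrow> cterm \<Rightarrow> nat" where
  "sat_env env w i (Sym a) = (w ! i = a)"
| "sat_env env w i (Neg \<phi>) = (\<not> sat_env env w i \<phi>)"
| "sat_env env w i (Conj \<phi> \<psi>) = (sat_env env w i \<phi> \<and> sat_env env w i \<psi>)"
| "sat_env env w i (Cmp ts c k) =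
     cmp_sem c (sum_list (map (\<lambda>(a, n). a * n) (map (map_prod id (tval_env env w i)) ts))) k"
| "sat_env env w i (Ref n) = env n i"
| "tval_env env w i (Cnt \<phi>) = card {j. j \<le> i \<and> sat_env env w j \<phi>}"
| "tval_env env w i (Const c) = c"

lemma sat_subst:
  "(\<forall>n\<in>refs \<phi>. n < length L) \<Longrightarrow> sat w i (subst L \<phi>) = sat_env (\<lambda>n j. sat w j (L ! n)) w i \<phi>"
  "(\<forall>n\<in>refs_t t. n < length L) \<Longrightarrow> tval w i (subst_t L t) = tval_env (\<lambda>n j. sat w j (L ! n)) w i t"
proof (induction \<phi> and t arbitrary: i and i)
  case (Cmp ts c k)
  have "map (map_prod id (tval w i) \<circ> map_prod id (subst_t L)) ts
      = map (map_prod id (tval_env (\<lambda>n j. sat w j (L ! n)) w i)) ts"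
  proof (rule map_cong[OF refl])
    fix x assume "x \<in> set ts"
    with Cmp show "(map_prod id (tval w i) \<circ> map_prod id (subst_t L)) x
        = map_prod id (tval_env (\<lambda>n j. sat w j (L ! n)) w i) x"
      by (cases x) force
  qed
  then show ?case by (simp only: sat.simps subst.simps sat_env.simps map_map)
qed auto

lemma sat_env_cong:
  "(\<forall>n\<in>refs \<phi>. \<forall>j\<le>i. env n j = env' n j) \<Longrightarrow> sat_env env w i \<phi> = sat_env env' w i \<phi>"
  "(\<forall>n\<in>refs_t t. \<forall>j\<le>i. env n j = env' n j) \<Longrightarrow> tval_env env w i t = tval_env env' w i t"
proof (induction \<phi> and t arbitrary: i and i)
  case (Cmp ts c k)
  have "map (map_prod id (tval_env env w i)) ts = map (map_prod id (tval_env env' w i)) ts"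
  proof (rule map_cong[OF refl])
    fix x assume "x \<in> set ts"
    with Cmp show "map_prod id (tval_env env w i) x = map_prod id (tval_env env' w i) x"
      by (cases x) force
  qed
  then show ?case by (simp only: sat_env.simps)
next
  case (Cnt \<phi>)
  then have "{j. j \<le> i \<and> sat_env env w j \<phi>} = {j. j \<le> i \<and> sat_env env' w j \<phi>}"
    by (auto dest: le_trans)
  then show ?case by simp
qed auto

lemma expand_lines_snoc: "expand_lines (P @ [l]) = expand_lines P @ [subst (expand_lines P) l]"
  by (simp add: expand_lines_def)

lemma length_expand_lines [simp]: "length (expand_lines P) = length P"
  by (induction P rule: rev_induct) (simp_all add: expand_lines_def)

lemma take_expand_lines: "take n (expand_lines P) = expand_lines (take n P)"
proof (induction P rule: rev_induct)
  case (snoc l P)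
  then show ?case
    by (cases "n \<le> length P") (simp_all add: expand_lines_snoc)
qed (simp add: expand_lines_def)

lemma nth_expand_lines:
  "n < length P \<Longrightarrow> expand_lines P ! n = subst (expand_lines (take n P)) (P ! n)"
  by (induction P rule: rev_induct) (auto simp: expand_lines_snoc nth_append less_Suc_eq)

lemma refs_less_if_wf_prog: "wf_prog P \<Longrightarrow> n < length P \<Longrightarrow> m \<in> refs (P ! n) \<Longrightarrow> m < n"
  by (simp add: wf_prog_def)

lemma sat_expand_lines_nth:
  assumes "wf_prog P" "n < length P"
  shows "sat w i (expand_lines P ! n) = sat_env (\<lambda>m j. sat w j (expand_lines P ! m)) w i (P ! n)"
proof -
  have refs: "\<forall>m\<in>refs (P ! n). m < n"
    using assms refs_less_if_wf_prog by blast
  have "sat w i (expand_lines P ! n) = sat w i (subst (expand_lines (take n P)) (P ! n))"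
    using assms by (simp add: nth_expand_lines)
  also have "\<dots> = sat_env (\<lambda>m j. sat w j (expand_lines (take n P) ! m)) w i (P ! n)"
    using refs assms by (intro sat_subst) auto
  also have "\<dots> = sat_env (\<lambda>m j. sat w j (expand_lines P ! m)) w i (P ! n)"
    using refs by (intro sat_env_cong) (auto simp flip: take_expand_lines)
  finally show ?thesis .
qed

lemma prog_formula_eq_nth: "P \<noteq> [] \<Longrightarrow> prog_formula P = expand_lines P ! (length P - 1)"
  by (metis prog_formula_def last_conv_nth length_0_conv length_expand_lines)

lemma sat_prog_formula:
  assumes "wf_prog P"
  shows "sat w i (prog_formula P) = sat_env (\<lambda>m j. sat w j (expand_lines P ! m)) w i (last P)"
  using assms by (simp add: wf_prog_def prog_formula_eq_nth sat_expand_lines_nth last_conv_nth)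

lemma fdepth_subst_le:
  "(\<forall>n\<in>refs \<phi>. n < length L \<and> fdepth (L ! n) \<le> D) \<Longrightarrow> fdepth (subst L \<phi>) \<le> fdepth \<phi> + D"
  "(\<forall>n\<in>refs_t t. n < length L \<and> fdepth (L ! n) \<le> D) \<Longrightarrow> tdepth_t (subst_t L t) \<le> tdepth_t t + D"
proof (induction \<phi> and t)
  case (Cmp ts c k)
  have "tdepth_t (subst_t L t) \<le> Max (insert 0 (tdepth_t ` snd ` set ts)) + D"
    if "(a, t) \<in> set ts" for a t
  proof -
    have "tdepth_t (subst_t L t) \<le> tdepth_t t + D"
      using Cmp that by force
    also have "tdepth_t t \<le> Max (insert 0 (tdepth_t ` snd ` set ts))"
      using that by (intro Max_ge) force+
    finally show ?thesis by simp
  qed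
  then show ?case by (auto simp: image_image)
qed auto

lemma fdepth_expand_lines_nth_le:
  assumes "wf_prog P" "n < length P" "\<forall>m\<in>refs (P ! n). fdepth (expand_lines P ! m) \<le> D"
  shows "fdepth (expand_lines P ! n) \<le> fdepth (P ! n) + D"
proof -
  have refs: "\<forall>m\<in>refs (P ! n). m < n"
    using assms refs_less_if_wf_prog by blast
  have "fdepth (expand_lines P ! n) = fdepth (subst (expand_lines (take n P)) (P ! n))"
    using assms by (simp add: nth_expand_lines)
  also have "\<dots> \<le> fdepth (P ! n) + D"
    using refs assms by (intro fdepth_subst_le) (auto simp flip: take_expand_lines)
  finally show ?thesis .
qed

lemma finite_fconsts: "finite (fconsts \<phi>)" "finite (tconsts t)"
  by (induction \<phi> and t) auto

lemma bitlen_le_if_less_power: "n < 2 ^ k \<Longrightarrow> bitlen n \<le> k + 1"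
proof (induction k arbitrary: n)
  case (Suc k)
  then show ?case
    by (cases "n < 2") (simp_all add: less_mult_imp_div_less)
qed simp

lemma bitlen_0_1 [simp]: "bitlen 0 = 1" "bitlen 1 = 1" "bitlen (Suc 0) = 1"
  by simp_all

declare bitlen.simps [simp del]

fun Disj_list :: "form list \<Rightarrow> form" where
  "Disj_list [] = Cmp [] Gt 0"
| "Disj_list (\<phi> # \<phi>s) = Neg (Conj (Neg \<phi>) (Neg (Disj_list \<phi>s)))"

fun Conj_list :: "form list \<Rightarrow> form" where
  "Conj_list [] = Cmp [] Ge 0"
| "Conj_list (\<phi> # \<phi>s) = Conj \<phi> (Conj_list \<phi>s)"

lemma sat_env_Disj_list [simp]: "sat_env env w i (Disj_list \<phi>s) = (\<exists>\<phi>\<in>set \<phi>s. sat_env env w i \<phi>)"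
  by (induction \<phi>s) auto

lemma sat_env_Conj_list [simp]: "sat_env env w i (Conj_list \<phi>s) = (\<forall>\<phi>\<in>set \<phi>s. sat_env env w i \<phi>)"
  by (induction \<phi>s) auto

lemma refs_Disj_list [simp]: "refs (Disj_list \<phi>s) = (\<Union>\<phi>\<in>set \<phi>s. refs \<phi>)"
  by (induction \<phi>s) auto

lemma refs_Conj_list [simp]: "refs (Conj_list \<phi>s) = (\<Union>\<phi>\<in>set \<phi>s. refs \<phi>)"
  by (induction \<phi>s) auto

lemma fconsts_Disj_list [simp]: "fconsts (Disj_list \<phi>s) = insert 0 (\<Union>\<phi>\<in>set \<phi>s. fconsts \<phi>)"
  by (induction \<phi>s) auto

lemma fconsts_Conj_list [simp]: "fconsts (Conj_list \<phi>s) = insert 0 (\<Union>\<phi>\<in>set \<phi>s. fconsts \<phi>)"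
  by (induction \<phi>s) auto

lemma fdepth_Disj_list_le: "(\<forall>\<phi>\<in>set \<phi>s. fdepth \<phi> \<le> D) \<Longrightarrow> fdepth (Disj_list \<phi>s) \<le> D"
  by (induction \<phi>s) auto

lemma fdepth_Conj_list_le: "(\<forall>\<phi>\<in>set \<phi>s. fdepth \<phi> \<le> D) \<Longrightarrow> fdepth (Conj_list \<phi>s) \<le> D"
  by (induction \<phi>s) auto

lemma fgirth_Disj_list_le: "(\<forall>\<phi>\<in>set \<phi>s. fgirth \<phi> \<le> D) \<Longrightarrow> fgirth (Disj_list \<phi>s) \<le> D"
  by (induction \<phi>s) auto

lemma fgirth_Conj_list_le: "(\<forall>\<phi>\<in>set \<phi>s. fgirth \<phi> \<le> D) \<Longrightarrow> fgirth (Conj_list \<phi>s) \<le> D"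
  by (induction \<phi>s) auto

lemma fconsts_Disj_list_le:
  "x \<in> fconsts (Disj_list \<phi>s) \<Longrightarrow> (\<And>\<phi> y. \<phi> \<in> set \<phi>s \<Longrightarrow> y \<in> fconsts \<phi> \<Longrightarrow> y \<le> X) \<Longrightarrow> x \<le> (X::nat)"
  by auto

lemma fconsts_Conj_list_le:
  "x \<in> fconsts (Conj_list \<phi>s) \<Longrightarrow> (\<And>\<phi> y. \<phi> \<in> set \<phi>s \<Longrightarrow> y \<in> fconsts \<phi> \<Longrightarrow> y \<le> X) \<Longrightarrow> x \<le> (X::nat)"
  by auto

lemma fsize_Disj_list_le: "(\<forall>\<phi>\<in>set \<phi>s. fsize \<phi> \<le> M) \<Longrightarrow> fsize (Disj_list \<phi>s) \<le> length \<phi>s * (M + 4) + 2"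
  by (induction \<phi>s) (auto simp: bitlen.simps)

lemma fsize_Disj_list_map_le:
  "(\<And>x. x \<in> set xs \<Longrightarrow> fsize (f x) \<le> M) \<Longrightarrow> fsize (Disj_list (map f xs)) \<le> length xs * (M + 4) + 2"
  using fsize_Disj_list_le[of "map f xs" M] by auto

lemma fsize_Conj_list_le: "(\<forall>\<phi>\<in>set \<phi>s. fsize \<phi> \<le> M) \<Longrightarrow> fsize (Conj_list \<phi>s) \<le> length \<phi>s * (M + 1) + 2"
  by (induction \<phi>s) (auto simp: bitlen.simps)

lemma fsize_Conj_list_map_le:
  "(\<And>x. x \<in> set xs \<Longrightarrow> fsize (f x) \<le> M) \<Longrightarrow> fsize (Conj_list (map f xs)) \<le> length xs * (M + 1) + 2"
  using fsize_Conj_list_le[of "map f xs" M] by auto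

lemma sum_list_le_length_mult: "(\<forall>x\<in>set xs. f x \<le> (M::nat)) \<Longrightarrow> sum_list (map f xs) \<le> length xs * M"
  by (induction xs) auto

section \<open>Prefix sums as weighted counts\<close>

definition encodes :: "(nat \<Rightarrow> nat \<Rightarrow> bool) \<Rightarrow> nat \<Rightarrow> 'a list \<Rightarrow> (nat \<Rightarrow> 'a) \<Rightarrow> nat \<Rightarrow> bool" where
  "encodes env r xs h i \<longleftrightarrow> (\<forall>j\<le>i. h j \<in> set xs \<and> (\<forall>k<length xs. env (r + k) j = (h j = xs ! k)))"

definition bit_disj :: "'a list \<Rightarrow> nat \<Rightarrow> ('a \<Rightarrow> nat) \<Rightarrow> nat \<Rightarrow> form" where
  "bit_disj xs r a b = Disj_list (map (\<lambda>k. Ref (r + k)) (filter (\<lambda>k. bit (a (xs ! k)) b) [0..<length xs]))"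

definition sum_test :: "'a list \<Rightarrow> nat \<Rightarrow> nat \<Rightarrow> ('a \<Rightarrow> nat) \<Rightarrow> nat \<Rightarrow> cmp \<Rightarrow> nat \<Rightarrow> form" where
  "sum_test xs r nb a c0 c u = Cmp ((1, Const c0) # map (\<lambda>b. (2 ^ b, Cnt (bit_disj xs r a b))) [0..<nb]) c u"

lemma encodes_in_set: "encodes env r xs h i \<Longrightarrow> j \<le> i \<Longrightarrow> h j \<in> set xs"
  by (simp add: encodes_def)

lemma encodes_ref:
  "encodes env r xs h i \<Longrightarrow> j \<le> i \<Longrightarrow> k < length xs \<Longrightarrow> env (r + k) j = (h j = xs ! k)"
  by (simp add: encodes_def)

lemma sat_env_bit_disj:
  assumes "encodes env r xs h i"
  shows "sat_env env w i (bit_disj xs r a b) = bit (a (h i)) b"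
proof -
  have "sat_env env w i (bit_disj xs r a b) \<longleftrightarrow> (\<exists>k<length xs. bit (a (xs ! k)) b \<and> env (r + k) i)"
    by (auto simp: bit_disj_def)
  also have "\<dots> \<longleftrightarrow> (\<exists>k<length xs. bit (a (xs ! k)) b \<and> h i = xs ! k)"
    using encodes_ref[OF assms order_refl] by auto
  also have "\<dots> \<longleftrightarrow> bit (a (h i)) b"
    using encodes_in_set[OF assms order_refl] by (metis in_set_conv_nth)
  finally show ?thesis .
qed

lemma encodes_le: "encodes env r xs h i \<Longrightarrow> j \<le> i \<Longrightarrow> encodes env r xs h j"
  by (simp add: encodes_def)

lemma count_bit_disj:
  assumes "encodes env r xs h i"
  shows "card {j. j \<le> i \<and> sat_env env w j (bit_disj xs r a b)} = (\<Sum>j\<le>i. of_bool (bit (a (h j)) b))"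
proof -
  have "{j. j \<le> i \<and> sat_env env w j (bit_disj xs r a b)} = {..i} \<inter> {j. bit (a (h j)) b}"
    using sat_env_bit_disj[OF encodes_le[OF assms]] by auto
  then show ?thesis
    by (simp add: sum_of_bool_eq[OF finite_atMost])
qed

text \<open>Writing each summand in binary, the prefix sum is \<open>\<Sum>b. 2^b * #[bit b of the summand]\<close>,
  and bit \<open>b\<close> of the summand at a position is a disjunction of reference lines.\<close>
lemma sat_env_sum_test:
  assumes enc: "encodes env r xs h i" and bound: "\<forall>y\<in>set xs. a y < 2 ^ nb"
  shows "sat_env env w i (sum_test xs r nb a c0 c u) = cmp_sem c (c0 + (\<Sum>j\<le>i. a (h j))) u"
proof -
  have "(\<Sum>b<nb. 2 ^ b * card {j. j \<le> i \<and> sat_env env w j (bit_disj xs r a b)})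
      = (\<Sum>b<nb. 2 ^ b * (\<Sum>j\<le>i. of_bool (bit (a (h j)) b)))"
    using enc by (simp add: count_bit_disj)
  also have "\<dots> = (\<Sum>j\<le>i. \<Sum>b<nb. 2 ^ b * of_bool (bit (a (h j)) b))"
    unfolding sum_distrib_left by (rule sum.swap)
  also have "\<dots> = (\<Sum>j\<le>i. take_bit nb (a (h j)))"
    by (simp add: take_bit_sum push_bit_eq_mult atLeast0LessThan)
  also have "\<dots> = (\<Sum>j\<le>i. a (h j))"
    using encodes_in_set[OF enc] bound by (intro sum.cong) (simp_all add: take_bit_nat_eq_self)
  finally have "(\<Sum>b<nb. 2 ^ b * card {j. j \<le> i \<and> sat_env env w j (bit_disj xs r a b)})
      = (\<Sum>j\<le>i. a (h j))" .
  then show ?thesis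
    by (simp add: sum_test_def comp_def atLeast0LessThan flip: sum_set_upt_conv_sum_list_nat)
qed

lemma refs_sum_test: "refs (sum_test xs r nb a c0 c u) \<subseteq> {r..<r + length xs}"
  by (auto simp: sum_test_def bit_disj_def)

lemma fdepth_bit_disj: "fdepth (bit_disj xs r a b) = 0"
  using fdepth_Disj_list_le[of _ 0] by (simp add: bit_disj_def)

lemma fgirth_bit_disj: "fgirth (bit_disj xs r a b) = 0"
  using fgirth_Disj_list_le[of _ 0] by (simp add: bit_disj_def)

lemma fdepth_sum_test_le: "fdepth (sum_test xs r nb a c0 c u) \<le> 1"
  by (simp add: sum_test_def fdepth_bit_disj)

lemma fgirth_sum_test: "fgirth (sum_test xs r nb a c0 c u) = nb + 1"
  by (simp add: sum_test_def fgirth_bit_disj image_constant_conv)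

lemma fconsts_sum_test_le:
  assumes "c0 \<le> X" "u \<le> X" "2 ^ nb \<le> X" "x \<in> fconsts (sum_test xs r nb a c0 c u)"
  shows "x \<le> X"
proof -
  have "2 ^ b \<le> X" if "b < nb" for b
  proof -
    have "(2::nat) ^ b \<le> 2 ^ nb"
      using that by simp
    with assms(3) show ?thesis
      by linarith
  qed
  moreover have "1 \<le> X"
    using one_le_power[of "2::nat" nb] assms(3) by linarith
  ultimately show ?thesis
    using assms by (auto simp: sum_test_def bit_disj_def)
qed

lemma fsize_bit_disj_le: "fsize (bit_disj xs r a b) \<le> 5 * length xs + 2"
proof -
  have "fsize (bit_disj xs r a b)
      \<le> length (filter (\<lambda>k. bit (a (xs ! k)) b) [0..<length xs]) * (1 + 4) + 2"
    unfolding bit_disj_def by (rule fsize_Disj_list_map_le) simp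
  also have "\<dots> \<le> 5 * length xs + 2"
    using length_filter_le[of _ "[0..<length xs]"] by simp
  finally show ?thesis .
qed

lemma fsize_sum_test_le:
  assumes "c0 < 2 ^ E" "u < 2 ^ E"
  shows "fsize (sum_test xs r nb a c0 c u) \<le> 2 * E + 5 + nb * (nb + 5 * length xs + 5)"
proof -
  have "1 + bitlen (2 ^ b) + (1 + fsize (bit_disj xs r a b)) \<le> nb + 5 * length xs + 5"
    if "b < nb" for b
    using bitlen_le_if_less_power[of "2 ^ b" "Suc b"] fsize_bit_disj_le[of xs r a b] that by simp
  then have "(\<Sum>b\<leftarrow>[0..<nb]. 1 + bitlen (2 ^ b) + (1 + fsize (bit_disj xs r a b)))
      \<le> length [0..<nb] * (nb + 5 * length xs + 5)"
    by (intro sum_list_le_length_mult) simp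
  moreover have "bitlen c0 \<le> E + 1" "bitlen u \<le> E + 1"
    using assms bitlen_le_if_less_power by auto
  ultimately show ?thesis
    by (simp add: sum_test_def comp_def)
qed

section \<open>Fixed-precision arithmetic\<close>

lemma Fnum_eq_image: "Fnum p s = (\<lambda>m. real_of_int m / 2 ^ s) ` {-(2 ^ (p - 1))..<2 ^ (p - 1)}"
  unfolding Fnum_def by auto

lemma finite_Fnum [simp]: "finite (Fnum p s)"
  unfolding Fnum_eq_image by simp

lemma zero_in_Fnum [simp]: "0 \<in> Fnum p s"
  unfolding Fnum_def by (rule CollectI, rule exI[of _ 0]) simp

lemma card_Fnum_le:
  assumes "p \<ge> 1"
  shows "card (Fnum p s) \<le> 2 ^ p"
proof -
  have "card (Fnum p s) \<le> card {-(2 ^ (p - 1))..<(2::int) ^ (p - 1)}"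
    unfolding Fnum_eq_image by (rule card_image_le) simp
  also have "\<dots> = 2 ^ p"
    using assms by (cases p) (simp_all add: nat_mult_distrib)
  finally show ?thesis .
qed

definition mantissa :: "nat \<Rightarrow> real \<Rightarrow> int" where
  "mantissa s y = \<lfloor>y * 2 ^ s\<rfloor>"

lemma mantissa_0 [simp]: "mantissa s 0 = 0"
  by (simp add: mantissa_def)

lemma Fnum_mantissa:
  assumes "y \<in> Fnum p s"
  shows "y = real_of_int (mantissa s y) / 2 ^ s" "-(2 ^ (p - 1)) \<le> mantissa s y" "mantissa s y < 2 ^ (p - 1)"
proof -
  obtain m :: int where m: "y = m / 2 ^ s" "-(2 ^ (p - 1)) \<le> m" "m < 2 ^ (p - 1)"
    using assms unfolding Fnum_def by blast
  then have "mantissa s y = m" by (simp add: mantissa_def)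
  with m show "y = real_of_int (mantissa s y) / 2 ^ s" "-(2 ^ (p - 1)) \<le> mantissa s y" "mantissa s y < 2 ^ (p - 1)"
    by auto
qed

lemma abs_mantissa_le: "y \<in> Fnum p s \<Longrightarrow> \<bar>mantissa s y\<bar> \<le> 2 ^ (p - 1)"
  using Fnum_mantissa[of y p s] by auto

lemma rnd_in_Fnum: "rnd p s x \<in> Fnum p s"
proof (cases "\<exists>y\<in>Fnum p s. y \<le> x")
  case True
  then have "Max {y \<in> Fnum p s. y \<le> x} \<in> {y \<in> Fnum p s. y \<le> x}"
    by (intro Max_in) auto
  with True show ?thesis by (simp add: rnd_def)
next
  case False
  then show ?thesis
    using zero_in_Fnum by (auto simp: rnd_def intro!: Min_in simp del: zero_in_Fnum)
qed

lemma le_rnd: "y \<in> Fnum p s \<Longrightarrow> y \<le> x \<Longrightarrow> y \<le> rnd p s x"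
  unfolding rnd_def by (auto intro: Max_ge)

lemma rnd_le: "y \<in> Fnum p s \<Longrightarrow> y \<le> x \<Longrightarrow> rnd p s x \<le> x"
proof -
  assume "y \<in> Fnum p s" "y \<le> x"
  moreover from this have "Max {y \<in> Fnum p s. y \<le> x} \<in> {y \<in> Fnum p s. y \<le> x}"
    by (intro Max_in) auto
  ultimately show ?thesis by (auto simp: rnd_def)
qed

lemma rnd_nonneg: "0 \<le> x \<Longrightarrow> 0 \<le> rnd p s x"
  by (rule le_rnd) auto

lemma mantissa_rnd_nonneg: "0 \<le> x \<Longrightarrow> 0 \<le> mantissa s (rnd p s x)"
  using rnd_nonneg[of x p s] by (simp add: mantissa_def)

lemma rnd_eq_0_if_less:
  assumes "0 \<le> x" "x < 1 / 2 ^ s"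
  shows "rnd p s x = 0"
proof -
  let ?m = "mantissa s (rnd p s x)"
  have "rnd p s x = ?m / 2 ^ s"
    using Fnum_mantissa(1)[OF rnd_in_Fnum] .
  moreover have "rnd p s x \<le> x"
    using assms by (intro rnd_le[of 0]) auto
  ultimately have "real_of_int ?m / 2 ^ s < 1 / 2 ^ s"
    using assms by linarith
  then have "?m < 1"
    by (simp add: divide_less_cancel)
  with mantissa_rnd_nonneg[OF assms(1), of s p] have "?m = 0"
    by simp
  with \<open>rnd p s x = ?m / 2 ^ s\<close> show ?thesis
    by simp
qed

lemma rnd_0 [simp]: "rnd p s 0 = 0"
  by (rule rnd_eq_0_if_less) auto

text \<open>With a single bit the only representable numbers are \<open>-2^-s\<close> and \<open>0\<close>.\<close>
lemma rnd_eq_0_if_one_bit: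
  assumes "0 \<le> x"
  shows "rnd 1 s x = 0"
proof -
  have F: "rnd 1 s x \<in> Fnum 1 s"
    by (rule rnd_in_Fnum)
  have "mantissa s (rnd 1 s x) \<le> 0"
    using Fnum_mantissa(3)[OF F] by simp
  then have "rnd 1 s x \<le> 0"
    using Fnum_mantissa(1)[OF F] by (metis divide_nonpos_pos of_int_le_0_iff zero_less_numeral zero_less_power)
  with rnd_nonneg[OF assms, of 1 s] show ?thesis
    by simp
qed

lemma Fvec_eq_lists: "Fvec p s d = {xs. set xs \<subseteq> Fnum p s \<and> length xs = d}"
  by (auto simp: Fvec_def)

lemma finite_Fvec [simp]: "finite (Fvec p s d)"
  by (simp add: Fvec_eq_lists finite_lists_length_eq)

lemma card_Fvec_le:
  assumes "p \<ge> 1"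
  shows "card (Fvec p s d) \<le> 2 ^ (p * d)"
proof -
  have "card (Fvec p s d) = card (Fnum p s) ^ d"
    by (simp add: Fvec_eq_lists card_lists_length_eq)
  also have "\<dots> \<le> (2 ^ p) ^ d"
    using assms by (intro power_mono card_Fnum_le) simp_all
  finally show ?thesis
    by (simp add: power_mult)
qed

lemma replicate_0_in_Fvec: "replicate d 0 \<in> Fvec p s d"
  by (auto simp: Fvec_def)

lemma length_Fvec: "x \<in> Fvec p s d \<Longrightarrow> length x = d"
  by (simp add: Fvec_def)

lemma nth_Fvec: "x \<in> Fvec p s d \<Longrightarrow> t < d \<Longrightarrow> x ! t \<in> Fnum p s"
  by (auto simp: Fvec_def)

section \<open>Transformer semantics\<close>

definition exp_score :: "nat \<Rightarrow> nat \<Rightarrow> vecfun \<Rightarrow> vecfun \<Rightarrow> real list \<Rightarrow> real list \<Rightarrow> real" where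
  "exp_score p s WQ WK x y = rnd p s (exp (dotp (WQ x) (WK y)))"

definition attention ::
    "nat \<Rightarrow> nat \<Rightarrow> nat \<Rightarrow> vecfun \<Rightarrow> vecfun \<Rightarrow> vecfun \<Rightarrow> real list list \<Rightarrow> nat \<Rightarrow> real list" where
  "attention p s d WQ WK WV H i = map (\<lambda>t. rnd p s (\<Sum>j\<le>i.
      rnd p s (exp_score p s WQ WK (H ! i) (H ! j) / (\<Sum>j'\<le>i. exp_score p s WQ WK (H ! i) (H ! j')))
        * (WV (H ! j) ! t))) [0..<d]"

lemma length_layer_apply [simp]: "length (layer_apply p s d lay H) = length H"
  by (cases lay) (simp add: layer_apply_def Let_def)

lemma nth_layer_apply:
  "j < length H \<Longrightarrow>
    layer_apply p s d (WQ, WK, WV, f) H ! j = f (map2 (+) (attention p s d WQ WK WV H j) (H ! j))"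
  by (simp add: layer_apply_def Let_def attention_def exp_score_def)

lemma length_attention [simp]: "length (attention p s d WQ WK WV H i) = d"
  by (simp add: attention_def)

lemma attention_in_Fvec: "attention p s d WQ WK WV H i \<in> Fvec p s d"
  by (auto simp: Fvec_def attention_def rnd_in_Fnum)

lemma attention_cong:
  "(\<And>j. j \<le> i \<Longrightarrow> H ! j = H' ! j) \<Longrightarrow> attention p s d WQ WK WV H i = attention p s d WQ WK WV H' i"
  unfolding attention_def by (intro map_cong refl arg_cong[where f = "rnd p s"] sum.cong) auto

definition hidden_upto :: "nat \<Rightarrow> nat \<Rightarrow> nat \<Rightarrow> transformer \<Rightarrow> nat \<Rightarrow> nat option list \<Rightarrow> real list list" where
  "hidden_upto p s d T l u = foldl (\<lambda>H lay. layer_apply p s d lay H) (map (emb T) u) (take l (layers T))"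

lemma hidden_upto_0: "hidden_upto p s d T 0 u = map (emb T) u"
  by (simp add: hidden_upto_def)

lemma hidden_upto_Suc:
  "hidden_upto p s d T (Suc l) u =
    (if l < tdepth T then layer_apply p s d (layers T ! l) (hidden_upto p s d T l u)
     else hidden_upto p s d T l u)"
  by (simp add: hidden_upto_def tdepth_def take_Suc_conv_app_nth)

lemma hidden_eq_hidden_upto: "hidden p s d T u = hidden_upto p s d T (tdepth T) u"
  by (simp add: hidden_upto_def hidden_def tdepth_def)

lemma length_hidden_upto [simp]: "length (hidden_upto p s d T l u) = length u"
  by (induction l) (simp_all add: hidden_upto_0 hidden_upto_Suc)

lemma hidden_upto_append:
  "j < length u \<Longrightarrow> hidden_upto p s d T l (u @ v) ! j = hidden_upto p s d T l u ! j"
proof (induction l arbitrary: j)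
  case 0
  then show ?case by (simp add: hidden_upto_0 nth_append)
next
  case (Suc l)
  obtain WQ WK WV f where "layers T ! l = (WQ, WK, WV, f)"
    by (cases "layers T ! l") auto
  moreover have "attention p s d WQ WK WV (hidden_upto p s d T l (u @ v)) j
      = attention p s d WQ WK WV (hidden_upto p s d T l u) j"
    using Suc by (intro attention_cong) simp
  ultimately show ?case
    using Suc by (simp add: hidden_upto_Suc nth_layer_apply)
qed

lemma cubic_exponent_le:
  fixes p d :: nat
  assumes "p \<ge> 2" "d \<ge> 1"
  shows "4 * p * d + 10 * p \<le> p ^ 3 * d + 20"
proof -
  consider "p = 2" | "p = 3" | "p \<ge> 4"
    using assms(1) by linarith
  then show ?thesis
  proof cases
    case 3
    have "16 * (p * d) \<le> p * p * (p * d)"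
      using mult_le_mono[OF 3 3] by (intro mult_le_mono1) simp
    moreover have "p \<le> p * d"
      using assms(2) by simp
    moreover have "p ^ 3 * d = p * p * (p * d)" "4 * p * d = 4 * (p * d)"
      by (simp_all add: power3_eq_cube algebra_simps)
    ultimately show ?thesis
      by linarith
  qed (use assms in \<open>simp_all add: power3_eq_cube\<close>)
qed

section \<open>The simulating program\<close>

locale fp_transformer =
  fixes \<Sigma> :: "nat set" and p s d :: nat and T :: transformer
  assumes finite_\<Sigma>: "finite \<Sigma>" and \<Sigma>_nonempty: "\<Sigma> \<noteq> {}"
    and p_pos: "p \<ge> 1" and s_le_p: "s \<le> p" and d_pos: "d \<ge> 1"
    and wf: "wf_transformer \<Sigma> p s d T"
begin

abbreviation V :: "real list set" where "V \<equiv> Fvec p s d"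
abbreviation L :: nat where "L \<equiv> tdepth T"
abbreviation hid :: "nat \<Rightarrow> nat option list \<Rightarrow> real list list" where "hid \<equiv> hidden_upto p s d T"

definition Wq :: "nat \<Rightarrow> vecfun" where "Wq l = fst (layers T ! l)"
definition Wk :: "nat \<Rightarrow> vecfun" where "Wk l = fst (snd (layers T ! l))"
definition Wv :: "nat \<Rightarrow> vecfun" where "Wv l = fst (snd (snd (layers T ! l)))"
definition ffn :: "nat \<Rightarrow> vecfun" where "ffn l = snd (snd (snd (layers T ! l)))"

lemma layers_nth_eq: "layers T ! l = (Wq l, Wk l, Wv l, ffn l)"
  by (simp add: Wq_def Wk_def Wv_def ffn_def)

lemma card_\<Sigma>_pos: "card \<Sigma> \<ge> 1"
  using finite_\<Sigma> \<Sigma>_nonempty by (simp add: Suc_le_eq card_gt_0_iff)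

lemma emb_in_V: "a \<in> insert None (Some ` \<Sigma>) \<Longrightarrow> emb T a \<in> V"
  using wf unfolding wf_transformer_def by blast

lemma Wv_in_V: "l < L \<Longrightarrow> x \<in> V \<Longrightarrow> Wv l x \<in> V"
  using wf nth_mem[of l "layers T"] unfolding wf_transformer_def tdepth_def Wv_def
  by (fastforce simp: case_prod_beta)

lemma ffn_in_V: "l < L \<Longrightarrow> length x = d \<Longrightarrow> ffn l x \<in> V"
  using wf nth_mem[of l "layers T"] unfolding wf_transformer_def tdepth_def ffn_def
  by (fastforce simp: case_prod_beta)

lemma hid_Suc_nth:
  "l < L \<Longrightarrow> j < length u \<Longrightarrow>
    hid (Suc l) u ! j = ffn l (map2 (+) (attention p s d (Wq l) (Wk l) (Wv l) (hid l u) j) (hid l u ! j))"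
  by (simp add: hidden_upto_Suc layers_nth_eq nth_layer_apply)

lemma hid_in_V:
  assumes "set u \<subseteq> insert None (Some ` \<Sigma>)" "j < length u"
  shows "hid l u ! j \<in> V"
proof (induction l)
  case 0
  then show ?case
    using assms emb_in_V by (simp add: hidden_upto_0 subset_iff)
next
  case (Suc l)
  show ?case
  proof (cases "l < L")
    case True
    with Suc show ?thesis
      using assms by (simp add: hid_Suc_nth ffn_in_V length_Fvec)
  next
    case False
    with Suc show ?thesis
      by (simp add: hidden_upto_Suc)
  qed
qed

text \<open>With \<open>p = 1\<close> every attention weight rounds to \<open>0\<close>, so each position evolves
  independently of the others.\<close>
fun pointwise_hidden :: "nat \<Rightarrow> nat option \<Rightarrow> real list" where
  "pointwise_hidden 0 a = emb T a"
| "pointwise_hidden (Suc l) a = (if l < L then ffn l (pointwise_hidden l a) else pointwise_hidden l a)"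

lemma attention_one_bit: "attention 1 s d WQ WK WV H j = replicate d 0"
proof -
  have "exp_score 1 s WQ WK x y = 0" for x y
    unfolding exp_score_def by (rule rnd_eq_0_if_one_bit) simp
  then show ?thesis
    by (simp add: attention_def map_replicate_const)
qed

lemma hid_one_bit:
  assumes "p = 1" "set u \<subseteq> insert None (Some ` \<Sigma>)" "j < length u"
  shows "hid l u ! j = pointwise_hidden l (u ! j)"
proof (induction l)
  case 0
  then show ?case by (simp add: hidden_upto_0 assms)
next
  case (Suc l)
  have add_0: "map2 (+) (replicate d 0) (hid l u ! j) = hid l u ! j"
    using length_Fvec[OF hid_in_V[OF assms(2,3)]] by (intro nth_equalityI) simp_all
  show ?case
  proof (cases "l < L")
    case True
    have "attention p s d (Wq l) (Wk l) (Wv l) (hid l u) j = replicate d 0"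
      using assms(1) attention_one_bit by simp
    with True Suc show ?thesis
      using assms(3) add_0 by (simp add: hid_Suc_nth)
  next
    case False
    with Suc show ?thesis
      by (simp add: hidden_upto_Suc)
  qed
qed

definition one_bit_prog :: "form list" where
  "one_bit_prog =
    [Disj_list (map Sym (filter (\<lambda>a. 0 < wout T (pointwise_hidden L (Some a))) (sorted_list_of_set \<Sigma>)))]"

lemma wf_one_bit_prog: "wf_prog one_bit_prog"
  by (auto simp: wf_prog_def one_bit_prog_def)

lemma simulates_one_bit_prog:
  assumes "p = 1"
  shows "simulates \<Sigma> p s d T one_bit_prog"
  unfolding simulates_def
proof (intro allI impI)
  fix w i assume w: "set w \<subseteq> \<Sigma>" and i: "i < length w"
  have "set (None # map Some w) \<subseteq> insert None (Some ` \<Sigma>)"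
    using w by auto
  then have "tout p s d T (None # map Some w) (Suc i) = wout T (pointwise_hidden L (Some (w ! i)))"
    using hid_one_bit[OF assms, of "None # map Some w" "Suc i" L] i
    by (simp add: tout_def hidden_eq_hidden_upto)
  moreover have "w ! i \<in> \<Sigma>"
    using w i by auto
  ultimately show "sat w i (prog_formula one_bit_prog) = (0 < tout p s d T (None # map Some w) (Suc i))"
    using sat_prog_formula[OF wf_one_bit_prog] finite_\<Sigma> by (auto simp: one_bit_prog_def)
qed

lemma prog_size_one_bit_prog: "prog_size one_bit_prog \<le> 7 * card \<Sigma>"
proof -
  let ?as = "filter (\<lambda>a. 0 < wout T (pointwise_hidden L (Some a))) (sorted_list_of_set \<Sigma>)"
  have "fsize (Disj_list (map Sym ?as)) \<le> length ?as * (1 + 4) + 2"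
    by (rule fsize_Disj_list_map_le) simp
  moreover have "length ?as \<le> card \<Sigma>"
    using length_filter_le[of _ "sorted_list_of_set \<Sigma>"] by simp
  ultimately show ?thesis
    using card_\<Sigma>_pos by (simp add: prog_size_def one_bit_prog_def)
qed

lemma prog_depth_one_bit_prog: "prog_depth one_bit_prog = 0"
proof -
  let ?\<phi> = "Disj_list (map Sym (filter (\<lambda>a. 0 < wout T (pointwise_hidden L (Some a))) (sorted_list_of_set \<Sigma>)))"
  have "fdepth (subst [] ?\<phi>) \<le> fdepth ?\<phi> + 0"
    by (rule fdepth_subst_le) auto
  moreover have "fdepth ?\<phi> \<le> 0"
    by (rule fdepth_Disj_list_le) auto
  ultimately show ?thesis
    by (simp add: prog_depth_def prog_formula_def expand_lines_def one_bit_prog_def)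
qed

lemma prog_precision_one_bit_prog: "prog_precision one_bit_prog = 1"
  by (simp add: prog_precision_def one_bit_prog_def)

lemma prog_girth_one_bit_prog: "prog_girth one_bit_prog = 0"
  using fgirth_Disj_list_le[of _ 0] by (simp add: prog_girth_def one_bit_prog_def)

definition vecs :: "real list list" where
  "vecs = (SOME xs. distinct xs \<and> set xs = V)"

definition N :: nat where
  "N = length vecs"

lemma distinct_vecs: "distinct vecs" and set_vecs: "set vecs = V"
proof -
  have "\<exists>xs. distinct xs \<and> set xs = V"
    using finite_distinct_list[OF finite_Fvec] by blast
  then have "distinct vecs \<and> set vecs = V"
    unfolding vecs_def by (rule someI_ex)
  then show "distinct vecs" "set vecs = V" by auto
qed

lemma N_eq_card: "N = card V"
  using distinct_vecs set_vecs distinct_card unfolding N_def by metis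

lemma N_pos: "N \<ge> 1"
  using replicate_0_in_Fvec[of d p s] by (simp add: N_eq_card Suc_le_eq card_gt_0_iff) blast

lemma N_le: "N \<le> 2 ^ (p * d)"
  using card_Fvec_le[OF p_pos] by (simp add: N_eq_card)

definition bos :: "nat \<Rightarrow> real list" where
  "bos l = hid l [None] ! 0"

lemma bos_in_V: "bos l \<in> V"
  unfolding bos_def by (rule hid_in_V) auto

lemma hid_nth_0: "hid l (None # u) ! 0 = bos l"
  using hidden_upto_append[of 0 "[None]" p s d T l u] by (simp add: bos_def)

definition nbits :: nat where "nbits = 2 * p"
definition denom_cap :: nat where "denom_cap = 2 ^ (s + p)"
definition cap :: nat where "cap = 2 ^ (4 * p)"

text \<open>\<open>score\<close> counts units of \<open>2^-s\<close> and \<open>term_mant\<close> units of \<open>2^-2s\<close>; the argument \<open>K\<close> stands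
  for the mantissa of the softmax denominator.\<close>
definition score :: "nat \<Rightarrow> real list \<Rightarrow> real list \<Rightarrow> nat" where
  "score l x y = nat (mantissa s (exp_score p s (Wq l) (Wk l) x y))"

definition weight :: "nat \<Rightarrow> real list \<Rightarrow> nat \<Rightarrow> real list \<Rightarrow> real" where
  "weight l x K y = rnd p s (real (score l x y) / real K)"

definition term_mant :: "nat \<Rightarrow> real list \<Rightarrow> nat \<Rightarrow> nat \<Rightarrow> real list \<Rightarrow> int" where
  "term_mant l x K t y = mantissa s (weight l x K y) * mantissa s (Wv l y ! t)"

definition term_pos :: "nat \<Rightarrow> real list \<Rightarrow> nat \<Rightarrow> nat \<Rightarrow> real list \<Rightarrow> nat" where
  "term_pos l x K t y = nat (term_mant l x K t y)"

definition term_neg :: "nat \<Rightarrow> real list \<Rightarrow> nat \<Rightarrow> nat \<Rightarrow> real list \<Rightarrow> nat" where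
  "term_neg l x K t y = nat (- term_mant l x K t y)"

definition term_bound :: nat where
  "term_bound = 2 ^ (p - 1) * 2 ^ (p - 1)"

lemma exp_score_eq_score: "exp_score p s (Wq l) (Wk l) x y = real (score l x y) / 2 ^ s"
  and score_less: "score l x y < 2 ^ (p - 1)"
proof -
  let ?e = "exp_score p s (Wq l) (Wk l) x y"
  have F: "?e \<in> Fnum p s"
    by (simp add: exp_score_def rnd_in_Fnum)
  have "0 \<le> mantissa s ?e"
    by (simp add: exp_score_def mantissa_rnd_nonneg)
  with Fnum_mantissa[OF F] show "?e = real (score l x y) / 2 ^ s" "score l x y < 2 ^ (p - 1)"
    by (auto simp: score_def nat_less_iff)
qed

lemma score_less_nbits: "score l x y < 2 ^ nbits"
proof -
  have "(2::nat) ^ (p - 1) \<le> 2 ^ nbits"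
    by (intro power_increasing) (simp_all add: nbits_def)
  with score_less[of l x y] show ?thesis
    by linarith
qed

lemma term_bound_less_nbits: "term_bound < 2 ^ nbits"
proof -
  have "term_bound = 2 ^ (2 * p - 2)"
    using p_pos by (simp add: term_bound_def flip: power_add)
  also have "\<dots> < 2 ^ nbits"
    using p_pos by (simp add: nbits_def)
  finally show ?thesis .
qed

lemma denom_cap_le_cap: "denom_cap \<le> cap"
  using s_le_p by (simp add: denom_cap_def cap_def)

lemma term_bound_denom_cap_le_cap: "term_bound * denom_cap \<le> cap"
proof -
  have "term_bound * denom_cap = 2 ^ (2 * p - 2 + (s + p))"
    using p_pos by (simp add: term_bound_def denom_cap_def flip: power_add)
  also have "\<dots> \<le> cap"
    using s_le_p by (simp add: cap_def)
  finally show ?thesis .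
qed

lemma mantissa_Wv_le:
  assumes "l < L" "y \<in> V" "t < d"
  shows "\<bar>mantissa s (Wv l y ! t)\<bar> \<le> 2 ^ (p - 1)"
  using abs_mantissa_le[OF nth_Fvec[OF Wv_in_V[OF assms(1,2)] assms(3)]] .

lemma abs_term_mant_le:
  assumes "l < L" "y \<in> V" "t < d"
  shows "\<bar>term_mant l x K t y\<bar> \<le> term_bound"
proof -
  have "\<bar>term_mant l x K t y\<bar> = \<bar>mantissa s (weight l x K y)\<bar> * \<bar>mantissa s (Wv l y ! t)\<bar>"
    by (simp add: term_mant_def abs_mult)
  also have "\<dots> \<le> 2 ^ (p - 1) * 2 ^ (p - 1)"
    using mantissa_Wv_le[OF assms] abs_mantissa_le[OF rnd_in_Fnum]
    by (intro mult_mono) (auto simp: weight_def)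
  finally show ?thesis
    by (simp add: term_bound_def)
qed

lemma term_pos_le: "l < L \<Longrightarrow> y \<in> V \<Longrightarrow> t < d \<Longrightarrow> term_pos l x K t y \<le> term_bound"
  and term_neg_le: "l < L \<Longrightarrow> y \<in> V \<Longrightarrow> t < d \<Longrightarrow> term_neg l x K t y \<le> term_bound"
  using abs_term_mant_le[of l y t x K] by (auto simp: term_pos_def term_neg_def)

lemma term_pos_less_nbits: "l < L \<Longrightarrow> t < d \<Longrightarrow> \<forall>y\<in>V. term_pos l x K t y < 2 ^ nbits"
  and term_neg_less_nbits: "l < L \<Longrightarrow> t < d \<Longrightarrow> \<forall>y\<in>V. term_neg l x K t y < 2 ^ nbits"
  using term_pos_le term_neg_le term_bound_less_nbits by (meson le_less_trans)+

lemma term_mant_eq_0: "score l x y = 0 \<Longrightarrow> term_mant l x K t y = 0"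
  by (simp add: term_mant_def weight_def)

lemma term_pos_le_score: "l < L \<Longrightarrow> y \<in> V \<Longrightarrow> t < d \<Longrightarrow> term_pos l x K t y \<le> term_bound * score l x y"
  and term_neg_le_score: "l < L \<Longrightarrow> y \<in> V \<Longrightarrow> t < d \<Longrightarrow> term_neg l x K t y \<le> term_bound * score l x y"
proof -
  assume "l < L" "y \<in> V" "t < d"
  then have "term_pos l x K t y \<le> term_bound * score l x y \<and> term_neg l x K t y \<le> term_bound * score l x y"
  proof (cases "score l x y = 0")
    case True
    then show ?thesis by (simp add: term_pos_def term_neg_def term_mant_eq_0)
  next
    case False
    then have "term_bound \<le> term_bound * score l x y" by simp
    with term_pos_le term_neg_le \<open>l < L\<close> \<open>y \<in> V\<close> \<open>t < d\<close> show ?thesis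
      by (meson order.trans)
  qed
  then show "term_pos l x K t y \<le> term_bound * score l x y" "term_neg l x K t y \<le> term_bound * score l x y"
    by auto
qed

lemma term_mant_split: "real_of_int (term_mant l x K t y) = real (term_pos l x K t y) - real (term_neg l x K t y)"
  by (simp add: term_pos_def term_neg_def)

lemma weight_mult_Wv:
  assumes "l < L" "y \<in> V" "t < d"
  shows "weight l x K y * (Wv l y ! t) = (real (term_pos l x K t y) - real (term_neg l x K t y)) / 2 ^ (2 * s)"
proof -
  have "weight l x K y * (Wv l y ! t)
      = (mantissa s (weight l x K y) / 2 ^ s) * (mantissa s (Wv l y ! t) / 2 ^ s)"
    using Fnum_mantissa(1)[OF rnd_in_Fnum, of p s] Fnum_mantissa(1)[OF nth_Fvec[OF Wv_in_V[OF assms(1,2)] assms(3)]]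
    by (metis weight_def)
  also have "\<dots> = real_of_int (term_mant l x K t y) / 2 ^ (2 * s)"
    by (simp add: term_mant_def mult_2 power_add)
  also have "\<dots> = (real (term_pos l x K t y) - real (term_neg l x K t y)) / 2 ^ (2 * s)"
    by (simp only: term_mant_split)
  finally show ?thesis .
qed

definition denom :: "nat \<Rightarrow> real list list \<Rightarrow> nat \<Rightarrow> nat" where
  "denom l H i = (\<Sum>j\<le>i. score l (H ! i) (H ! j))"

definition num_pos :: "nat \<Rightarrow> real list list \<Rightarrow> nat \<Rightarrow> nat \<Rightarrow> nat \<Rightarrow> nat" where
  "num_pos l H i K t = (\<Sum>j\<le>i. term_pos l (H ! i) K t (H ! j))"

definition num_neg :: "nat \<Rightarrow> real list list \<Rightarrow> nat \<Rightarrow> nat \<Rightarrow> nat \<Rightarrow> nat" where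
  "num_neg l H i K t = (\<Sum>j\<le>i. term_neg l (H ! i) K t (H ! j))"

lemma attention_nth_eq:
  assumes "t < d"
  shows "attention p s d (Wq l) (Wk l) (Wv l) H i ! t
    = rnd p s (\<Sum>j\<le>i. weight l (H ! i) (denom l H i) (H ! j) * (Wv l (H ! j) ! t))"
proof -
  have "(\<Sum>j'\<le>i. exp_score p s (Wq l) (Wk l) (H ! i) (H ! j')) = real (denom l H i) / 2 ^ s"
    by (simp add: exp_score_eq_score denom_def sum_divide_distrib)
  then show ?thesis
    using assms by (simp add: attention_def exp_score_eq_score weight_def)
qed

text \<open>Once the denominator reaches \<open>2^(s+p)\<close> every weight is below \<open>2^-s\<close> and rounds to \<open>0\<close>.\<close>
lemma attention_nth_eq_0_if_denom_ge:
  assumes "t < d" "denom_cap \<le> denom l H i"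
  shows "attention p s d (Wq l) (Wk l) (Wv l) H i ! t = 0"
proof -
  have "weight l x (denom l H i) y = 0" for x y
  proof -
    have "real (score l x y) * 2 ^ s < 2 ^ p * 2 ^ s"
      using score_less[of l x y] p_pos
      by (simp add: less_le_trans[OF _ power_increasing[of "p - 1" p "2::nat"]])
    also have "\<dots> = real denom_cap"
      by (simp add: denom_cap_def power_add)
    also have "\<dots> \<le> real (denom l H i)"
      using assms(2) by simp
    finally have less: "real (score l x y) * 2 ^ s < real (denom l H i)" .
    moreover have "0 < real (denom l H i)"
      using assms(2) less_le_trans[of 0 denom_cap] by (simp add: denom_cap_def)
    ultimately have "real (score l x y) / real (denom l H i) < 1 / 2 ^ s"
      by (simp add: field_simps)
    then show ?thesis
      unfolding weight_def by (intro rnd_eq_0_if_less) auto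
  qed
  then show ?thesis
    using attention_nth_eq[OF assms(1)] by simp
qed

lemma attention_nth_eq_num:
  assumes "l < L" "t < d" "\<forall>j\<le>i. H ! j \<in> V"
  shows "attention p s d (Wq l) (Wk l) (Wv l) H i ! t
    = rnd p s ((real (num_pos l H i (denom l H i) t) - real (num_neg l H i (denom l H i) t)) / 2 ^ (2 * s))"
  using assms
  by (simp add: attention_nth_eq weight_mult_Wv num_pos_def num_neg_def sum_subtractf
      flip: sum_divide_distrib)

lemma num_pos_le: "num_pos l H i K t \<le> term_bound * denom l H i"
  and num_neg_le: "num_neg l H i K t \<le> term_bound * denom l H i"
  if "l < L" "t < d" "\<forall>j\<le>i. H ! j \<in> V"
  using that
  by (auto simp: num_pos_def num_neg_def denom_def sum_distrib_left
      intro!: sum_mono term_pos_le_score term_neg_le_score)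

text \<open>Line \<open>l * N + k\<close> of the program holds at position \<open>i\<close> iff the hidden vector after
  \<open>l\<close> layers at \<open>i\<close> is \<open>vecs ! k\<close>.\<close>
definition layer_sum_test :: "nat \<Rightarrow> (real list \<Rightarrow> nat) \<Rightarrow> cmp \<Rightarrow> nat \<Rightarrow> form" where
  "layer_sum_test l a c u = sum_test vecs (l * N) nbits a (a (bos l)) c u"

definition num_test :: "nat \<Rightarrow> real list \<Rightarrow> nat \<Rightarrow> nat \<Rightarrow> real \<Rightarrow> form" where
  "num_test l x K t m = Disj_list (map (\<lambda>(u, v).
       Conj (layer_sum_test l (term_pos l x K t) Eq u) (layer_sum_test l (term_neg l x K t) Eq v))
     (filter (\<lambda>(u, v). rnd p s ((real u - real v) / 2 ^ (2 * s)) = m) (List.product [0..<cap] [0..<cap])))"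

definition attn_test :: "nat \<Rightarrow> real list \<Rightarrow> nat \<Rightarrow> real \<Rightarrow> form" where
  "attn_test l x t m = Disj_list ((if m = 0 then [layer_sum_test l (score l x) Ge denom_cap] else [])
     @ map (\<lambda>K. Conj (layer_sum_test l (score l x) Eq K) (num_test l x K t m)) [0..<denom_cap])"

definition layer_line :: "nat \<Rightarrow> real list \<Rightarrow> form" where
  "layer_line l y = Disj_list (map (\<lambda>(k, c).
       Conj (Ref (l * N + k)) (Conj_list (map (\<lambda>t. attn_test l (vecs ! k) t (c ! t)) [0..<d])))
     (filter (\<lambda>(k, c). ffn l (map2 (+) c (vecs ! k)) = y) (List.product [0..<N] vecs)))"

definition embed_line :: "real list \<Rightarrow> form" where
  "embed_line y = Disj_list (map Sym (filter (\<lambda>a. emb T (Some a) = y) (sorted_list_of_set \<Sigma>)))"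

definition line :: "nat \<Rightarrow> form" where
  "line n = (if n < N then embed_line (vecs ! n) else layer_line (n div N - 1) (vecs ! (n mod N)))"

definition out_line :: form where
  "out_line = Disj_list (map (\<lambda>k. Ref (L * N + k)) (filter (\<lambda>k. 0 < wout T (vecs ! k)) [0..<N]))"

definition prog :: "form list" where
  "prog = map line [0..<Suc L * N] @ [out_line]"

text \<open>\<open>H\<close> carries the BOS vector at index \<open>0\<close>, so word position \<open>j\<close> is \<open>H ! Suc j\<close>.\<close>
definition hidden_encoded :: "(nat \<Rightarrow> nat \<Rightarrow> bool) \<Rightarrow> nat \<Rightarrow> real list list \<Rightarrow> nat \<Rightarrow> bool" where
  "hidden_encoded env l H i \<longleftrightarrow>
     encodes env (l * N) vecs (\<lambda>j. H ! Suc j) i \<and> H ! 0 = bos l \<and> (\<forall>j\<le>Suc i. H ! j \<in> V)"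

lemma sat_env_layer_sum_test:
  assumes "hidden_encoded env l H i" "\<forall>y\<in>V. a y < 2 ^ nbits"
  shows "sat_env env w i (layer_sum_test l a c u) = cmp_sem c (\<Sum>j\<le>Suc i. a (H ! j)) u"
  using assms sat_env_sum_test[of env "l * N" vecs "\<lambda>j. H ! Suc j" i a nbits w "a (bos l)" c u]
  by (simp add: hidden_encoded_def layer_sum_test_def set_vecs sum.atMost_Suc_shift del: sum.atMost_Suc)

lemma sat_env_num_test:
  assumes enc: "hidden_encoded env l H i" and l: "l < L" and t: "t < d"
  shows "sat_env env w i (num_test l (H ! Suc i) K t m) \<longleftrightarrow>
    num_pos l H (Suc i) K t < cap \<and> num_neg l H (Suc i) K t < cap \<and>
    rnd p s ((real (num_pos l H (Suc i) K t) - real (num_neg l H (Suc i) K t)) / 2 ^ (2 * s)) = m"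
  using sat_env_layer_sum_test[OF enc] term_pos_less_nbits[OF l t] term_neg_less_nbits[OF l t]
  by (auto simp: num_test_def num_pos_def num_neg_def)

lemma sat_env_attn_test:
  assumes enc: "hidden_encoded env l H i" and l: "l < L" and t: "t < d"
  shows "sat_env env w i (attn_test l (H ! Suc i) t m) \<longleftrightarrow>
    attention p s d (Wq l) (Wk l) (Wv l) H (Suc i) ! t = m"
proof -
  let ?K = "denom l H (Suc i)"
  have HV: "\<forall>j\<le>Suc i. H ! j \<in> V"
    using enc by (simp add: hidden_encoded_def)
  have score: "sat_env env w i (layer_sum_test l (score l (H ! Suc i)) c u) = cmp_sem c ?K u" for c u
    using sat_env_layer_sum_test[OF enc] score_less_nbits by (simp add: denom_def)
  show ?thesis
  proof (cases "denom_cap \<le> ?K")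
    case True
    then have "sat_env env w i (attn_test l (H ! Suc i) t m) \<longleftrightarrow> m = 0"
      by (auto simp: attn_test_def score)
    with True show ?thesis
      using attention_nth_eq_0_if_denom_ge[OF t] by auto
  next
    case False
    then have "term_bound * ?K < term_bound * denom_cap"
      by (simp add: term_bound_def)
    then have "term_bound * ?K < cap"
      using term_bound_denom_cap_le_cap by linarith
    then have "num_pos l H (Suc i) ?K t < cap" "num_neg l H (Suc i) ?K t < cap"
      using num_pos_le[OF l t HV] num_neg_le[OF l t HV] by (auto intro: le_less_trans)
    moreover have "sat_env env w i (attn_test l (H ! Suc i) t m) \<longleftrightarrow> sat_env env w i (num_test l (H ! Suc i) ?K t m)"
      using False by (auto simp: attn_test_def score intro!: bexI[of _
          "Conj (layer_sum_test l (score l (H ! Suc i)) Eq ?K) (num_test l (H ! Suc i) ?K t m)"])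
    ultimately show ?thesis
      using sat_env_num_test[OF enc l t] attention_nth_eq_num[OF l t HV] by auto
  qed
qed

lemma attn_tests_iff_eq_attention:
  assumes enc: "hidden_encoded env l H i" and l: "l < L" and c: "length c = d"
  shows "(\<forall>t<d. sat_env env w i (attn_test l (H ! Suc i) t (c ! t))) \<longleftrightarrow>
    c = attention p s d (Wq l) (Wk l) (Wv l) H (Suc i)"
  using c sat_env_attn_test[OF enc l] by (auto simp: list_eq_iff_nth_eq)

lemma sat_env_layer_line_iff_ex:
  assumes enc: "hidden_encoded env l H i"
  shows "sat_env env w i (layer_line l y) \<longleftrightarrow>
    (\<exists>c\<in>V. ffn l (map2 (+) c (H ! Suc i)) = y \<and> (\<forall>t<d. sat_env env w i (attn_test l (H ! Suc i) t (c ! t))))"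
proof -
  have ref: "env (l * N + k) i \<longleftrightarrow> H ! Suc i = vecs ! k" if "k < N" for k
    using enc encodes_ref[of env "l * N" vecs "\<lambda>j. H ! Suc j" i i k] that
    by (simp add: hidden_encoded_def N_def)
  have "H ! Suc i \<in> set vecs"
    using enc encodes_in_set[of env "l * N" vecs "\<lambda>j. H ! Suc j" i i] by (simp add: hidden_encoded_def)
  then obtain k where k: "k < N" "vecs ! k = H ! Suc i"
    by (auto simp: in_set_conv_nth N_def)
  have "sat_env env w i (layer_line l y) \<longleftrightarrow>
      (\<exists>k<N. env (l * N + k) i \<and> (\<exists>c\<in>V. ffn l (map2 (+) c (vecs ! k)) = y \<and>
        (\<forall>t<d. sat_env env w i (attn_test l (vecs ! k) t (c ! t)))))"
    by (force simp: layer_line_def set_vecs)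
  also have "\<dots> \<longleftrightarrow> (\<exists>k<N. H ! Suc i = vecs ! k \<and> (\<exists>c\<in>V. ffn l (map2 (+) c (vecs ! k)) = y \<and>
        (\<forall>t<d. sat_env env w i (attn_test l (vecs ! k) t (c ! t)))))"
    using ref by auto
  also have "\<dots> \<longleftrightarrow> (\<exists>c\<in>V. ffn l (map2 (+) c (H ! Suc i)) = y \<and>
        (\<forall>t<d. sat_env env w i (attn_test l (H ! Suc i) t (c ! t))))"
  proof
    assume "\<exists>c\<in>V. ffn l (map2 (+) c (H ! Suc i)) = y \<and>
        (\<forall>t<d. sat_env env w i (attn_test l (H ! Suc i) t (c ! t)))"
    with k show "\<exists>k<N. H ! Suc i = vecs ! k \<and> (\<exists>c\<in>V. ffn l (map2 (+) c (vecs ! k)) = y \<and>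
        (\<forall>t<d. sat_env env w i (attn_test l (vecs ! k) t (c ! t))))"
      by (intro exI[of _ k]) auto
  qed auto
  finally show ?thesis .
qed

lemma sat_env_layer_line:
  assumes enc: "hidden_encoded env l H i" and l: "l < L"
  shows "sat_env env w i (layer_line l y) \<longleftrightarrow>
    ffn l (map2 (+) (attention p s d (Wq l) (Wk l) (Wv l) H (Suc i)) (H ! Suc i)) = y"
proof -
  let ?c = "attention p s d (Wq l) (Wk l) (Wv l) H (Suc i)"
  have "sat_env env w i (layer_line l y) \<longleftrightarrow> (\<exists>c\<in>V. ffn l (map2 (+) c (H ! Suc i)) = y \<and> c = ?c)"
    unfolding sat_env_layer_line_iff_ex[OF enc]
    by (intro bex_cong refl) (simp add: attn_tests_iff_eq_attention[OF enc l length_Fvec])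
  also have "\<dots> \<longleftrightarrow> ffn l (map2 (+) ?c (H ! Suc i)) = y"
    using attention_in_Fvec by auto
  finally show ?thesis .
qed

lemma div_N_minus_1_bounds:
  assumes "N \<le> n" "n < Suc L * N"
  shows "n div N - 1 < L" "(n div N - 1) * N + N \<le> n" "Suc (n div N - 1) = n div N"
proof -
  have "N div N \<le> n div N"
    using assms(1) by (rule div_le_mono)
  then obtain q where q: "n div N = Suc q"
    using N_pos by (cases "n div N") auto
  moreover have "n div N < Suc L"
    using assms N_pos by (simp add: div_less_iff_less_mult)
  moreover have "n div N * N \<le> n"
    by simp
  ultimately show "n div N - 1 < L" "(n div N - 1) * N + N \<le> n" "Suc (n div N - 1) = n div N"
    by simp_all
qed

lemma length_prog: "length prog = Suc (Suc L * N)"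
  by (simp add: prog_def)

lemma prog_nth: "n < Suc L * N \<Longrightarrow> prog ! n = line n"
  by (simp add: prog_def nth_append)

lemma last_prog: "last prog = out_line"
  by (simp add: prog_def)

lemma refs_attn_test: "refs (attn_test l x t m) \<subseteq> {l * N..<l * N + N}"
  using refs_sum_test[of vecs "l * N"]
  by (fastforce simp: attn_test_def num_test_def layer_sum_test_def N_def)

lemma refs_layer_line: "refs (layer_line l y) \<subseteq> {l * N..<l * N + N}"
  using refs_attn_test[of l] by (fastforce simp: layer_line_def)

lemma refs_line: "N \<le> n \<Longrightarrow> refs (line n) \<subseteq> {(n div N - 1) * N..<(n div N - 1) * N + N}"
  and refs_line_0: "n < N \<Longrightarrow> refs (line n) = {}"
  by (simp_all add: line_def refs_layer_line embed_line_def)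

lemma refs_out_line: "refs out_line \<subseteq> {L * N..<L * N + N}"
  by (auto simp: out_line_def)

lemma wf_prog: "wf_prog prog"
  unfolding wf_prog_def
proof (intro conjI allI impI ballI)
  show "prog \<noteq> []"
    by (simp add: prog_def)
next
  fix n m assume n: "n < length prog" and m: "m \<in> refs (prog ! n)"
  show "m < n"
  proof (cases "n < Suc L * N")
    case True
    with m refs_line_0 refs_line[of n] div_N_minus_1_bounds[of n] show ?thesis
      by (cases "n < N") (fastforce simp: prog_nth)+
  next
    case False
    then have "prog ! n = out_line"
      using n by (simp add: prog_def nth_append)
    with m refs_out_line False show ?thesis
      by fastforce
  qed
qed

abbreviation prog_env :: "nat list \<Rightarrow> nat \<Rightarrow> nat \<Rightarrow> bool" where
  "prog_env w \<equiv> \<lambda>m j. sat w j (expand_lines prog ! m)"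

lemma hidden_encodedI:
  assumes w: "set w \<subseteq> \<Sigma>" and i: "i < length w"
    and ref: "\<And>j k. j \<le> i \<Longrightarrow> k < N \<Longrightarrow> env (l * N + k) j \<longleftrightarrow> hid l (None # map Some w) ! Suc j = vecs ! k"
  shows "hidden_encoded env l (hid l (None # map Some w)) i"
proof -
  have "set (None # map Some w) \<subseteq> insert None (Some ` \<Sigma>)"
    using w by auto
  then have "hid l (None # map Some w) ! j \<in> V" if "j \<le> Suc i" for j
    using hid_in_V that i by simp
  with ref show ?thesis
    by (auto simp: hidden_encoded_def encodes_def hid_nth_0 set_vecs N_def)
qed

lemma sat_expand_prog_nth:
  assumes w: "set w \<subseteq> \<Sigma>"
  shows "n < Suc L * N \<Longrightarrow> i < length w \<Longrightarrow>
    sat w i (expand_lines prog ! n) \<longleftrightarrow> hid (n div N) (None # map Some w) ! Suc i = vecs ! (n mod N)"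
proof (induction n arbitrary: i rule: less_induct)
  case (less n)
  have line: "sat w i (expand_lines prog ! n) = sat_env (prog_env w) w i (line n)"
    using sat_expand_lines_nth[OF wf_prog, of n w i] less.prems by (simp add: length_prog prog_nth)
  show ?case
  proof (cases "n < N")
    case True
    have "w ! i \<in> \<Sigma>"
      using w less.prems by auto
    then show ?thesis
      using line True less.prems finite_\<Sigma> by (auto simp: line_def embed_line_def hidden_upto_0)
  next
    case False
    define l where "l = n div N - 1"
    have l: "l < L" "l * N + N \<le> n" "Suc l = n div N"
      using div_N_minus_1_bounds[OF _ less.prems(1)] False by (simp_all add: l_def)
    have "hidden_encoded (prog_env w) l (hid l (None # map Some w)) i"
    proof (rule hidden_encodedI[OF w less.prems(2)])
      fix j k assume "j \<le> i" "k < N"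
      with l less.prems show "prog_env w (l * N + k) j \<longleftrightarrow> hid l (None # map Some w) ! Suc j = vecs ! k"
        using less.IH[of "l * N + k" j] by simp
    qed
    moreover have "line n = layer_line l (vecs ! (n mod N))"
      using False by (simp add: line_def l_def)
    ultimately show ?thesis
      using line l less.prems by (simp add: sat_env_layer_line hid_Suc_nth flip: l(3))
  qed
qed

lemma simulates_prog: "simulates \<Sigma> p s d T prog"
  unfolding simulates_def
proof (intro allI impI)
  fix w i assume w: "set w \<subseteq> \<Sigma>" and i: "i < length w"
  let ?h = "hid L (None # map Some w) ! Suc i"
  have "set (None # map Some w) \<subseteq> insert None (Some ` \<Sigma>)"
    using w by auto
  then have "?h \<in> set vecs"
    using hid_in_V i by (simp add: set_vecs)
  have "sat w i (prog_formula prog) \<longleftrightarrow> sat_env (prog_env w) w i out_line"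
    using sat_prog_formula[OF wf_prog] by (simp add: last_prog)
  also have "\<dots> \<longleftrightarrow> (\<exists>k<N. 0 < wout T (vecs ! k) \<and> ?h = vecs ! k)"
    using sat_expand_prog_nth[OF w, of "L * N + _" i] i by (auto simp: out_line_def)
  also have "\<dots> \<longleftrightarrow> 0 < wout T ?h"
    using \<open>?h \<in> set vecs\<close> by (auto simp: in_set_conv_nth N_def)
  also have "\<dots> \<longleftrightarrow> 0 < tout p s d T (None # map Some w) (Suc i)"
    by (simp add: tout_def hidden_eq_hidden_upto)
  finally show "sat w i (prog_formula prog) \<longleftrightarrow> 0 < tout p s d T (None # map Some w) (Suc i)" .
qed

lemma fdepth_layer_sum_test_le: "fdepth (layer_sum_test l a c u) \<le> 1"
  unfolding layer_sum_test_def by (rule fdepth_sum_test_le)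

lemma fdepth_attn_test_le: "fdepth (attn_test l x t m) \<le> 1"
proof -
  have "fdepth (num_test l x K t m) \<le> 1" for K
    unfolding num_test_def using fdepth_layer_sum_test_le by (auto intro!: fdepth_Disj_list_le)
  then show ?thesis
    unfolding attn_test_def using fdepth_layer_sum_test_le by (auto intro!: fdepth_Disj_list_le)
qed

lemma fdepth_line_le: "fdepth (line n) \<le> 1"
  and fdepth_line_0: "n < N \<Longrightarrow> fdepth (line n) = 0"
proof -
  have embed: "fdepth (embed_line y) = 0" for y
    using fdepth_Disj_list_le[of _ 0] by (simp add: embed_line_def)
  then show "n < N \<Longrightarrow> fdepth (line n) = 0"
    by (simp add: line_def)
  have "fdepth (layer_line l y) \<le> 1" for l y
    unfolding layer_line_def using fdepth_attn_test_le
    by (auto intro!: fdepth_Disj_list_le fdepth_Conj_list_le)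
  with embed show "fdepth (line n) \<le> 1"
    by (simp add: line_def)
qed

lemma div_N_eq: "l * N \<le> m \<Longrightarrow> m < l * N + N \<Longrightarrow> m div N = l"
  by (simp add: div_nat_eqI mult.commute)

lemma fdepth_expand_prog_le: "n < Suc L * N \<Longrightarrow> fdepth (expand_lines prog ! n) \<le> n div N"
proof (induction n rule: less_induct)
  case (less n)
  have n: "n < length prog"
    using less.prems by (simp add: length_prog)
  show ?case
  proof (cases "n < N")
    case True
    then show ?thesis
      using fdepth_expand_lines_nth_le[OF wf_prog n, of 0] less.prems
      by (simp add: prog_nth refs_line_0 fdepth_line_0)
  next
    case False
    define l where "l = n div N - 1"
    have l: "l * N + N \<le> n" "Suc l = n div N"
      using div_N_minus_1_bounds[OF _ less.prems] False by (simp_all add: l_def)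
    have "fdepth (expand_lines prog ! n) \<le> fdepth (prog ! n) + l"
    proof (rule fdepth_expand_lines_nth_le[OF wf_prog n], rule ballI)
      fix m assume "m \<in> refs (prog ! n)"
      then have "l * N \<le> m" "m < l * N + N"
        using refs_line[of n] False less.prems by (auto simp: prog_nth l_def)
      then have "m div N = l" "m < n"
        using l by (simp_all add: div_N_eq)
      with less.IH[of m] less.prems show "fdepth (expand_lines prog ! m) \<le> l"
        by simp
    qed
    with fdepth_line_le[of n] l less.prems show ?thesis
      by (simp add: prog_nth)
  qed
qed

lemma prog_depth_le: "prog_depth prog \<le> L"
proof -
  have n: "Suc L * N < length prog"
    by (simp add: length_prog)
  have out: "prog ! (Suc L * N) = out_line"
    by (simp add: prog_def nth_append)
  have "fdepth (expand_lines prog ! (Suc L * N)) \<le> fdepth (prog ! (Suc L * N)) + L"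
  proof (rule fdepth_expand_lines_nth_le[OF wf_prog n], rule ballI)
    fix m assume "m \<in> refs (prog ! (Suc L * N))"
    then have "L * N \<le> m" "m < L * N + N"
      using refs_out_line out by auto
    then show "fdepth (expand_lines prog ! m) \<le> L"
      using fdepth_expand_prog_le[of m] by (simp add: div_N_eq)
  qed
  moreover have "fdepth out_line = 0"
    using fdepth_Disj_list_le[of _ 0] by (simp add: out_line_def)
  ultimately show ?thesis
    using out by (simp add: prog_depth_def prog_formula_eq_nth length_prog prog_def)
qed

lemma fgirth_line_le: "fgirth (line n) \<le> nbits + 1"
proof -
  have test: "fgirth (layer_sum_test l a c u) = nbits + 1" for l a c u
    by (simp add: layer_sum_test_def fgirth_sum_test)
  then have "fgirth (num_test l x K t m) \<le> nbits + 1" for l x K t m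
    unfolding num_test_def by (auto intro!: fgirth_Disj_list_le)
  with test have "fgirth (attn_test l x t m) \<le> nbits + 1" for l x t m
    unfolding attn_test_def by (auto intro!: fgirth_Disj_list_le)
  then show ?thesis
    unfolding line_def layer_line_def embed_line_def
    by (auto intro!: fgirth_Disj_list_le fgirth_Conj_list_le)
qed

lemma prog_girth_le: "prog_girth prog \<le> 2 * p + 1"
proof -
  have "fgirth out_line = 0"
    using fgirth_Disj_list_le[of _ 0] by (simp add: out_line_def)
  with fgirth_line_le show ?thesis
    by (auto simp: prog_girth_def prog_def nbits_def)
qed

lemma nbits_le_cap: "2 ^ nbits \<le> cap"
  by (simp add: nbits_def cap_def)

lemma fconsts_layer_sum_test_le:
  assumes "\<forall>y\<in>V. a y < 2 ^ nbits" "u \<le> cap" "x \<in> fconsts (layer_sum_test l a c u)"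
  shows "x \<le> cap"
proof -
  have "a (bos l) \<le> cap"
    using assms(1) bos_in_V nbits_le_cap by (meson le_trans less_imp_le)
  from this assms(2) nbits_le_cap assms(3) show ?thesis
    unfolding layer_sum_test_def by (rule fconsts_sum_test_le)
qed

lemma fconsts_num_test_le:
  assumes l: "l < L" and t: "t < d" and x: "x \<in> fconsts (num_test l y K t m)"
  shows "x \<le> cap"
  using x unfolding num_test_def
proof (rule fconsts_Disj_list_le)
  fix \<phi> z assume \<phi>: "\<phi> \<in> set (map (\<lambda>(u, v).
       Conj (layer_sum_test l (term_pos l y K t) Eq u) (layer_sum_test l (term_neg l y K t) Eq v))
     (filter (\<lambda>(u, v). rnd p s ((real u - real v) / 2 ^ (2 * s)) = m) (List.product [0..<cap] [0..<cap])))"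
    and z: "z \<in> fconsts \<phi>"
  from \<phi> obtain u v where uv: "u < cap" "v < cap"
    and \<phi>_eq: "\<phi> = Conj (layer_sum_test l (term_pos l y K t) Eq u) (layer_sum_test l (term_neg l y K t) Eq v)"
    by auto
  note pos = term_pos_less_nbits[OF l t, of y K] and neg = term_neg_less_nbits[OF l t, of y K]
  from z \<phi>_eq consider "z \<in> fconsts (layer_sum_test l (term_pos l y K t) Eq u)"
    | "z \<in> fconsts (layer_sum_test l (term_neg l y K t) Eq v)"
    by auto
  then show "z \<le> cap"
  proof cases
    case 1
    from pos _ this show ?thesis
      by (rule fconsts_layer_sum_test_le) (use uv in simp)
  next
    case 2
    from neg _ this show ?thesis
      by (rule fconsts_layer_sum_test_le) (use uv in simp)
  qed
qed

lemma fconsts_attn_test_le: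
  assumes l: "l < L" and t: "t < d" and x: "x \<in> fconsts (attn_test l y t m)"
  shows "x \<le> cap"
  using x unfolding attn_test_def
proof (rule fconsts_Disj_list_le)
  have score: "z \<le> cap" if "z \<in> fconsts (layer_sum_test l (score l y) c u)" "u \<le> denom_cap" for z c u
  proof (rule fconsts_layer_sum_test_le[OF _ _ that(1)])
    show "\<forall>y'\<in>V. score l y y' < 2 ^ nbits"
      by (simp add: score_less_nbits)
    show "u \<le> cap"
      using that(2) denom_cap_le_cap by simp
  qed
  fix \<phi> z assume "\<phi> \<in> set ((if m = 0 then [layer_sum_test l (score l y) Ge denom_cap] else [])
     @ map (\<lambda>K. Conj (layer_sum_test l (score l y) Eq K) (num_test l y K t m)) [0..<denom_cap])"
    and z: "z \<in> fconsts \<phi>"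
  then consider "z \<in> fconsts (layer_sum_test l (score l y) Ge denom_cap)"
    | K where "K < denom_cap" "z \<in> fconsts (layer_sum_test l (score l y) Eq K)"
    | K where "z \<in> fconsts (num_test l y K t m)"
    by (auto split: if_splits)
  then show "z \<le> cap"
  proof cases
    case 1
    then show ?thesis by (rule score) simp
  next
    case 2
    then show ?thesis using score[OF 2(2)] by simp
  next
    case 3
    then show ?thesis by (rule fconsts_num_test_le[OF l t])
  qed
qed

lemma fconsts_line_le:
  assumes n: "n < Suc L * N" and x: "x \<in> fconsts (line n)"
  shows "x \<le> cap"
proof (cases "n < N")
  case True
  with x show ?thesis
    by (auto simp: line_def embed_line_def)
next
  case False
  then have "n div N - 1 < L"
    using div_N_minus_1_bounds[OF _ n] by simp
  with False x show ?thesis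
    unfolding line_def layer_line_def
    by (auto elim!: fconsts_Disj_list_le fconsts_Conj_list_le intro: fconsts_attn_test_le)
qed

lemma cap_less: "cap < 2 ^ (4 * p + 1)"
  by (simp add: cap_def)

lemma prog_precision_le: "prog_precision prog \<le> 4 * p + 2"
proof -
  let ?C = "insert 0 (\<Union>\<phi>\<in>set prog. fconsts \<phi>)"
  have "fconsts out_line = {0}"
    by (auto simp: out_line_def)
  then have "x \<le> cap" if "x \<in> ?C" for x
    using that fconsts_line_le by (auto simp: prog_def)
  then have "Max ?C \<le> cap"
    using finite_fconsts by simp
  also note cap_less
  finally show ?thesis
    unfolding prog_precision_def using bitlen_le_if_less_power by fastforce
qed

lemma one_le_pN: "1 \<le> p * p * N"
  using p_pos N_pos by simp

lemma fsize_layer_sum_test_le: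
  assumes "\<forall>y\<in>V. a y < 2 ^ nbits" "u \<le> cap"
  shows "fsize (layer_sum_test l a c u) \<le> 39 * (p * p * N)"
proof -
  have "a (bos l) < 2 ^ (4 * p + 1)"
    using assms(1) bos_in_V less_le_trans[OF _ power_increasing[of nbits "4 * p + 1" "2::nat"]]
    by (simp add: nbits_def)
  moreover have "u < 2 ^ (4 * p + 1)"
    using assms(2) cap_less by linarith
  ultimately have "fsize (layer_sum_test l a c u) \<le> 2 * (4 * p + 1) + 5 + nbits * (nbits + 5 * N + 5)"
    unfolding layer_sum_test_def N_def by (rule fsize_sum_test_le)
  also have "\<dots> = 4 * (p * p) + 10 * (p * N) + 18 * p + 7"
    by (simp add: nbits_def algebra_simps)
  also have "\<dots> \<le> 39 * (p * p * N)"
  proof -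
    have "p * p \<le> p * p * N" "p * N \<le> p * p * N" "p \<le> p * p * N"
      using p_pos N_pos by (simp_all add: mult_le_mono)
    with one_le_pN show ?thesis by linarith
  qed
  finally show ?thesis .
qed

lemma fsize_num_test_le:
  assumes l: "l < L" and t: "t < d"
  shows "fsize (num_test l x K t m) \<le> 85 * (cap * cap * (p * p * N))"
proof -
  let ?Q = "p * p * N"
  let ?pairs = "filter (\<lambda>(u, v). rnd p s ((real u - real v) / 2 ^ (2 * s)) = m) (List.product [0..<cap] [0..<cap])"
  note pos = term_pos_less_nbits[OF l t, of x K] and neg = term_neg_less_nbits[OF l t, of x K]
  have "fsize (Conj (layer_sum_test l (term_pos l x K t) Eq u) (layer_sum_test l (term_neg l x K t) Eq v))
      \<le> 1 + 78 * ?Q" if "(u, v) \<in> set ?pairs" for u v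
    using fsize_layer_sum_test_le[OF pos, of u l Eq] fsize_layer_sum_test_le[OF neg, of v l Eq] that
    by simp
  then have "fsize (num_test l x K t m) \<le> length ?pairs * (1 + 78 * ?Q + 4) + 2"
    unfolding num_test_def by (intro fsize_Disj_list_map_le) auto
  also have "\<dots> \<le> cap * cap * (78 * ?Q + 5) + 2"
  proof -
    have "length ?pairs \<le> cap * cap"
      using length_filter_le[of _ "List.product [0..<cap] [0..<cap]"] by simp
    then have "length ?pairs * (78 * ?Q + 5) \<le> cap * cap * (78 * ?Q + 5)"
      by (rule mult_le_mono1)
    then show ?thesis
      by (simp add: add.commute)
  qed
  also have "\<dots> = 78 * (cap * cap * ?Q) + 5 * (cap * cap) + 2"
    by (simp add: algebra_simps)
  also have "\<dots> \<le> 85 * (cap * cap * ?Q)"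
  proof -
    have "cap * cap \<le> cap * cap * ?Q" "1 \<le> cap * cap"
      using one_le_pN by (simp_all add: cap_def)
    then show ?thesis by linarith
  qed
  finally show ?thesis .
qed

lemma fsize_score_test_le:
  "u \<le> denom_cap \<Longrightarrow> fsize (layer_sum_test l (score l x) c u) \<le> 39 * (p * p * N)"
  using fsize_layer_sum_test_le[of "score l x" u] score_less_nbits denom_cap_le_cap by simp

lemma fsize_attn_test_le:
  assumes l: "l < L" and t: "t < d"
  shows "fsize (attn_test l x t m) \<le> 260 * (denom_cap * (cap * cap * (p * p * N)))"
proof -
  let ?Q = "p * p * N" and ?R = "cap * cap * (p * p * N)" and ?D = denom_cap
  have R: "?Q \<le> ?R" "1 \<le> ?R"
    using one_le_pN by (simp_all add: cap_def)
  have D: "1 \<le> ?D"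
    by (simp add: denom_cap_def)
  let ?\<phi>s = "(if m = 0 then [layer_sum_test l (score l x) Ge ?D] else [])
     @ map (\<lambda>K. Conj (layer_sum_test l (score l x) Eq K) (num_test l x K t m)) [0..<?D]"
  have "fsize \<phi> \<le> 1 + 39 * ?Q + 85 * ?R" if "\<phi> \<in> set ?\<phi>s" for \<phi>
  proof -
    from that consider "\<phi> = layer_sum_test l (score l x) Ge ?D"
      | K where "K < ?D" "\<phi> = Conj (layer_sum_test l (score l x) Eq K) (num_test l x K t m)"
      by (auto split: if_splits)
    then show ?thesis
    proof cases
      case 1
      with fsize_score_test_le[of ?D l x Ge] show ?thesis by simp
    next
      case 2
      with fsize_score_test_le[of K l x Eq] fsize_num_test_le[OF l t, of x K m] show ?thesis by simp
    qed
  qed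
  then have "fsize (attn_test l x t m) \<le> length ?\<phi>s * (1 + 39 * ?Q + 85 * ?R + 4) + 2"
    unfolding attn_test_def by (intro fsize_Disj_list_le) blast
  also have "\<dots> \<le> (?D + 1) * (129 * ?R) + 2"
  proof (intro add_mono mult_le_mono)
    show "1 + 39 * ?Q + 85 * ?R + 4 \<le> 129 * ?R"
      using R by linarith
  qed simp_all
  also have "\<dots> = 129 * (?D * ?R) + 129 * ?R + 2"
    by (simp add: algebra_simps)
  also have "\<dots> \<le> 260 * (?D * ?R)"
  proof -
    have "?R \<le> ?D * ?R"
      using D by simp
    with R show ?thesis by linarith
  qed
  finally show ?thesis .
qed

lemma fsize_layer_line_le:
  assumes l: "l < L"
  shows "fsize (layer_line l y) \<le> 271 * (N * N * (d * (denom_cap * (cap * cap * (p * p * N)))))"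
proof -
  let ?A = "denom_cap * (cap * cap * (p * p * N))"
  let ?pairs = "filter (\<lambda>(k, c). ffn l (map2 (+) c (vecs ! k)) = y) (List.product [0..<N] vecs)"
  have A: "1 \<le> ?A"
    using one_le_pN by (simp add: denom_cap_def cap_def)
  have "fsize (Conj_list (map (\<lambda>t. attn_test l x t (c ! t)) [0..<d])) \<le> d * (260 * ?A + 1) + 2" for x c
  proof -
    have "fsize (Conj_list (map (\<lambda>t. attn_test l x t (c ! t)) [0..<d])) \<le> length [0..<d] * (260 * ?A + 1) + 2"
      using fsize_attn_test_le[OF l] by (intro fsize_Conj_list_map_le) simp
    then show ?thesis by simp
  qed
  then have "fsize (layer_line l y) \<le> length ?pairs * (d * (260 * ?A + 1) + 2 + 2 + 4) + 2"
    unfolding layer_line_def by (intro fsize_Disj_list_map_le) (auto simp: add.commute)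
  also have "\<dots> \<le> N * N * (269 * (d * ?A)) + 2"
  proof (intro add_mono mult_le_mono)
    show "length ?pairs \<le> N * N"
      using length_filter_le[of _ "List.product [0..<N] vecs"] by (simp add: N_def)
    have "d \<le> d * ?A"
      using A by simp
    moreover have "d * (260 * ?A + 1) = 260 * (d * ?A) + d"
      by (simp add: algebra_simps)
    ultimately show "d * (260 * ?A + 1) + 2 + 2 + 4 \<le> 269 * (d * ?A)"
      using d_pos by linarith
  qed simp
  also have "\<dots> \<le> 271 * (N * N * (d * ?A))"
  proof -
    have "1 \<le> N * N * (d * ?A)"
      using A d_pos N_pos by simp
    then show ?thesis by (simp add: algebra_simps)
  qed
  finally show ?thesis .
qed

lemma fsize_line_le:
  assumes "n < Suc L * N"
  shows "fsize (line n) \<le> 278 * (card \<Sigma> * (N * N * (d * (denom_cap * (cap * cap * (p * p * N))))))"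
proof -
  let ?B = "N * N * (d * (denom_cap * (cap * cap * (p * p * N))))"
  have B: "1 \<le> ?B"
    using one_le_pN d_pos N_pos by (simp add: denom_cap_def cap_def)
  have B\<Sigma>: "card \<Sigma> \<le> card \<Sigma> * ?B" "?B \<le> card \<Sigma> * ?B"
    using B card_\<Sigma>_pos by simp_all
  show ?thesis
  proof (cases "n < N")
    case True
    let ?as = "filter (\<lambda>a. emb T (Some a) = vecs ! n) (sorted_list_of_set \<Sigma>)"
    have "fsize (embed_line (vecs ! n)) \<le> length ?as * (1 + 4) + 2"
      unfolding embed_line_def by (rule fsize_Disj_list_map_le) simp
    moreover have "length ?as \<le> card \<Sigma>"
      using length_filter_le[of _ "sorted_list_of_set \<Sigma>"] by simp
    ultimately have "fsize (line n) \<le> 5 * card \<Sigma> + 2"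
      using True by (simp add: line_def)
    with B\<Sigma> card_\<Sigma>_pos show ?thesis
      by linarith
  next
    case False
    then have "fsize (line n) \<le> 271 * ?B"
      using fsize_layer_line_le div_N_minus_1_bounds(1)[OF _ assms] by (simp add: line_def)
    with B\<Sigma> show ?thesis
      by linarith
  qed
qed

lemma prog_size_le:
  assumes "L \<ge> 1"
  shows "prog_size prog \<le> 834 * (card \<Sigma> * L * N * (N * N * (d * (denom_cap * (cap * cap * (p * p * N))))))"
proof -
  let ?X = "card \<Sigma> * (N * N * (d * (denom_cap * (cap * cap * (p * p * N)))))"
  have X: "1 \<le> ?X"
    using one_le_pN d_pos N_pos card_\<Sigma>_pos by (simp add: denom_cap_def cap_def)
  have "(\<Sum>n\<leftarrow>[0..<Suc L * N]. fsize (line n)) \<le> length [0..<Suc L * N] * (278 * ?X)"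
    using fsize_line_le by (intro sum_list_le_length_mult) simp
  moreover have "fsize out_line \<le> 5 * N + 2"
  proof -
    have "fsize out_line \<le> length (filter (\<lambda>k. 0 < wout T (vecs ! k)) [0..<N]) * (1 + 4) + 2"
      unfolding out_line_def by (rule fsize_Disj_list_map_le) simp
    also have "\<dots> \<le> 5 * N + 2"
      using length_filter_le[of _ "[0..<N]"] by simp
    finally show ?thesis .
  qed
  ultimately have "prog_size prog \<le> Suc L * N * (278 * ?X) + 5 * N + 2"
    by (simp add: prog_size_def prog_def comp_def)
  also have "\<dots> = 278 * (L * N * ?X) + 278 * (N * ?X) + 5 * N + 2"
    by (simp add: algebra_simps)
  also have "\<dots> \<le> 834 * (L * N * ?X)"
  proof -
    have "N * ?X \<le> L * N * ?X" "N \<le> L * N * ?X" "1 \<le> L * N * ?X"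
      using assms X N_pos by (simp_all add: mult_le_mono)
    then show ?thesis by linarith
  qed
  finally show ?thesis
    by (simp add: algebra_simps)
qed

lemma prog_size_le_exp:
  assumes "p \<ge> 2" "L \<ge> 1"
  shows "prog_size prog \<le> 2 ^ 40 * card \<Sigma> * L * p ^ 2 * d * 2 ^ (p ^ 3 * d)"
proof -
  have "N * N * N * N \<le> 2 ^ (p * d) * 2 ^ (p * d) * 2 ^ (p * d) * 2 ^ (p * d)"
    using N_le by (intro mult_le_mono) auto
  moreover have "denom_cap * (cap * cap) \<le> 2 ^ (10 * p)"
    using s_le_p by (simp add: denom_cap_def cap_def flip: power_add)
  ultimately have "N * N * N * N * (denom_cap * (cap * cap))
      \<le> 2 ^ (p * d) * 2 ^ (p * d) * 2 ^ (p * d) * 2 ^ (p * d) * 2 ^ (10 * p)"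
    by (rule mult_le_mono)
  also have "\<dots> = 2 ^ (4 * p * d + 10 * p)"
    by (simp flip: power_add)
  also have "\<dots> \<le> 2 ^ (p ^ 3 * d + 20)"
    using cubic_exponent_le[OF assms(1) d_pos] by simp
  finally have exp: "N * N * N * N * (denom_cap * (cap * cap)) \<le> 2 ^ 20 * 2 ^ (p ^ 3 * d)"
    by (simp add: power_add)
  have "prog_size prog \<le> (834 * card \<Sigma> * L * p ^ 2 * d) * (N * N * N * N * (denom_cap * (cap * cap)))"
    using prog_size_le[OF assms(2)] by (simp add: algebra_simps power2_eq_square)
  also have "\<dots> \<le> (834 * card \<Sigma> * L * p ^ 2 * d) * (2 ^ 20 * 2 ^ (p ^ 3 * d))"
    using exp by (rule mult_le_mono2)
  also have "\<dots> \<le> 2 ^ 40 * card \<Sigma> * L * p ^ 2 * d * 2 ^ (p ^ 3 * d)"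
    by (simp add: algebra_simps)
  finally show ?thesis .
qed

lemma simulating_prog_exists:
  assumes "L \<ge> 1"
  shows "\<exists>P. wf_prog P \<and> simulates \<Sigma> p s d T P \<and>
    prog_size P \<le> 2 ^ 40 * card \<Sigma> * L * p ^ 2 * d * 2 ^ (p ^ 3 * d) \<and>
    prog_depth P \<le> L \<and> prog_precision P \<le> 4 * p + 2 \<and> prog_girth P \<le> 2 * p + 1"
proof (cases "p = 1")
  case True
  let ?X = "L * p ^ 2 * d * 2 ^ (p ^ 3 * d)"
  have "1 \<le> ?X"
    using assms d_pos p_pos by simp
  then have "2 ^ 40 * 1 \<le> 2 ^ 40 * ?X"
    by (rule mult_le_mono2)
  then have "7 \<le> 2 ^ 40 * ?X"
    by (rule order.trans[rotated]) simp
  then have "7 * card \<Sigma> \<le> 2 ^ 40 * ?X * card \<Sigma>"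
    by (rule mult_le_mono1)
  moreover have "2 ^ 40 * ?X * card \<Sigma> = 2 ^ 40 * card \<Sigma> * L * p ^ 2 * d * 2 ^ (p ^ 3 * d)"
    by (simp add: algebra_simps)
  ultimately have "prog_size one_bit_prog \<le> 2 ^ 40 * card \<Sigma> * L * p ^ 2 * d * 2 ^ (p ^ 3 * d)"
    using prog_size_one_bit_prog by linarith
  with True show ?thesis
    using wf_one_bit_prog simulates_one_bit_prog prog_depth_one_bit_prog
      prog_precision_one_bit_prog prog_girth_one_bit_prog by auto
next
  case False
  with p_pos have "p \<ge> 2" by simp
  then show ?thesis
    using wf_prog simulates_prog prog_size_le_exp assms prog_depth_le prog_precision_le prog_girth_le
    by blast
qed

end

theorem theoremC10:
  "\<exists>C::real. C > 0 \<and>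
     (\<forall>(\<Sigma>::nat set) p s d (T::transformer).
        finite \<Sigma> \<and> \<Sigma> \<noteq> {} \<and> p \<ge> 1 \<and> s \<le> p \<and> d \<ge> 1 \<and> tdepth T \<ge> 1 \<and>
        wf_transformer \<Sigma> p s d T \<longrightarrow>
        (\<exists>P. wf_prog P \<and> simulates \<Sigma> p s d T P \<and>
           real (prog_size P) \<le> C * real (card \<Sigma>) * real (tdepth T) * real p ^ 2 * real d
                                   * 2 ^ (p ^ 3 * d) \<and>
           real (prog_depth P) \<le> C * real (tdepth T) \<and>
           real (prog_precision P) \<le> C * real p \<and>
           real (prog_girth P) \<le> C * real p))"
proof (intro exI[of _ "2 ^ 40"] conjI allI impI)
  fix \<Sigma> p s d T
  assume asm: "finite \<Sigma> \<and> \<Sigma> \<noteq> {} \<and> p \<ge> 1 \<and> s \<le> p \<and> d \<ge> 1 \<and> tdepth T \<ge> 1 \<and> wf_transformer \<Sigma> p s d T"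
  then interpret fp_transformer \<Sigma> p s d T
    by unfold_locales auto
  obtain P where P: "wf_prog P" "simulates \<Sigma> p s d T P"
    and size: "prog_size P \<le> 2 ^ 40 * card \<Sigma> * L * p ^ 2 * d * 2 ^ (p ^ 3 * d)"
    and bounds: "prog_depth P \<le> L" "prog_precision P \<le> 4 * p + 2" "prog_girth P \<le> 2 * p + 1"
    using simulating_prog_exists asm by blast
  have "real (prog_size P) \<le> 2 ^ 40 * real (card \<Sigma>) * real L * real p ^ 2 * real d * 2 ^ (p ^ 3 * d)"
    using of_nat_mono[OF size] by simp
  moreover have "real (prog_depth P) \<le> 2 ^ 40 * real L"
    "real (prog_precision P) \<le> 2 ^ 40 * real p" "real (prog_girth P) \<le> 2 ^ 40 * real p"
    using bounds p_pos by simp_all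
  ultimately show "\<exists>P. wf_prog P \<and> simulates \<Sigma> p s d T P \<and>
      real (prog_size P) \<le> 2 ^ 40 * real (card \<Sigma>) * real L * real p ^ 2 * real d * 2 ^ (p ^ 3 * d) \<and>
      real (prog_depth P) \<le> 2 ^ 40 * real L \<and>
      real (prog_precision P) \<le> 2 ^ 40 * real p \<and> real (prog_girth P) \<le> 2 ^ 40 * real p"
    using P by blast
qed simp

end
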